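(* In the setting described in the context, fix real scalars $\sigma_w,\sigma_v$ and bounds $0<w_{\min}\le w_{\max}$, $0<\epsilon_{\min}\le\epsilon_{\max}$. For positive diagonal $E\in\mathbb R^{n\times n}$ and $W\in\mathbb R^{m\times m}$ let $\Pi_\tau(E,W)$ denote the system with transfer function $$\Pi_\tau(E,W)(s)=W^{1/2}R^T\big(sI+L_{e,s}^\tau RWR^T\big)^{-1}\begin{bmatrix}\sigma_wD_\tau^TE^{-1/2} & -\sigma_vL_{e,s}^\tau RW^{1/2}\end{bmatrix},\quad L_{e,s}^\tau=D_\tau^TE^{-1}D_\tau.$$ Then among all positive diagonal $E,W$ with $w_{\min}I\preceq W\preceq w_{\max}I$ and $\epsilon_{\min}I\preceq E\preceq\epsilon_{\max}I$, the choice $E=\epsilon_{\min}I$, $W=w_{\max}I$ minimizes $\|\Pi_\tau(E,W)\|_\infty$.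
   Context: Let $\mathcal G$ be an undirected, connected graph without self-loops, with node set $\{1,\dots,n\}$ ($n\ge2$) and edge set $\mathcal E$, $m=|\mathcal E|$. Give each edge an arbitrary orientation; the incidence matrix $D\in\mathbb R^{n\times m}$ has $D_{il}=1$ if node $i$ is the initial node of edge $l$, $-1$ if it is the terminal node, and $0$ otherwise. Fix a spanning tree $\mathcal G_\tau$ and order the edges so the first $n-1$ are tree edges; write $D=[D_\tau\ D_c]$ with $D_\tau\in\mathbb R^{n\times(n-1)}$. Set $T_\tau^c=(D_\tau^TD_\tau)^{-1}D_\tau^TD_c$ and $R=[I_{n-1}\ T_\tau^c]\in\mathbb R^{(n-1)\times m}$. Powers of positive diagonal matrices are taken entrywise; $\preceq$ is the Loewner order. For a stable transfer matrix $\Phi(s)$, $\|\Phi\|_\infty=\sup_{\omega\in\mathbb R}\bar\sigma(\Phi(j\omega))$ where $\bar\sigma$ is the largest singular value. *)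

theory Defs
  imports Complex_Main "Jordan_Normal_Form.Matrix" "Jordan_Normal_Form.Char_Poly"
begin

text \<open>Nodes are 0,...,n-1 (the paper's 1..n shifted by one). The edge list es gives each
  edge an orientation (initial node, terminal node); its order is the edge ordering.\<close>

definition undirected_rel :: "(nat \<times> nat) list \<Rightarrow> (nat \<times> nat) set" where
  "undirected_rel es = set es \<union> (set es)\<inverse>"

definition graph_connected :: "nat \<Rightarrow> (nat \<times> nat) list \<Rightarrow> bool" where
  "graph_connected n es = (\<forall>i<n. \<forall>j<n. (i, j) \<in> (undirected_rel es)\<^sup>*)"

definition valid_graph :: "nat \<Rightarrow> (nat \<times> nat) list \<Rightarrow> bool" where
  "valid_graph n es = ((\<forall>(i, j) \<in> set es. i < n \<and> j < n \<and> i \<noteq> j)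
      \<and> distinct (map (\<lambda>(i, j). {i, j}) es))"

text \<open>The first n-1 edges form a spanning tree: a connected subgraph on all n nodes
  with exactly n-1 edges (equivalently, a connected acyclic spanning subgraph).\<close>
definition first_edges_spanning_tree :: "nat \<Rightarrow> (nat \<times> nat) list \<Rightarrow> bool" where
  "first_edges_spanning_tree n es =
     (n - 1 \<le> length es \<and> graph_connected n (take (n - 1) es))"

definition incidence :: "nat \<Rightarrow> (nat \<times> nat) list \<Rightarrow> real mat" where
  "incidence n es = mat n (length es) (\<lambda>(i, l).
      if fst (es ! l) = i then 1 else if snd (es ! l) = i then -1 else 0)"

definition D_tau :: "nat \<Rightarrow> (nat \<times> nat) list \<Rightarrow> real mat" where
  "D_tau n es = mat n (n - 1) (\<lambda>(i, l). incidence n es $$ (i, l))"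

definition D_c :: "nat \<Rightarrow> (nat \<times> nat) list \<Rightarrow> real mat" where
  "D_c n es = mat n (length es - (n - 1)) (\<lambda>(i, l). incidence n es $$ (i, l + (n - 1)))"

definition minv :: "'a :: semiring_1 mat \<Rightarrow> 'a mat" where
  "minv A = (SOME B. B \<in> carrier_mat (dim_row A) (dim_row A) \<and>
                     A * B = 1\<^sub>m (dim_row A) \<and> B * A = 1\<^sub>m (dim_row A))"

definition T_tau_c :: "nat \<Rightarrow> (nat \<times> nat) list \<Rightarrow> real mat" where
  "T_tau_c n es = minv ((D_tau n es)\<^sup>T * D_tau n es) * (D_tau n es)\<^sup>T * D_c n es"

definition R_mat :: "nat \<Rightarrow> (nat \<times> nat) list \<Rightarrow> real mat" where
  "R_mat n es = mat (n - 1) (length es) (\<lambda>(i, l).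
      if l < n - 1 then (if i = l then 1 else 0) else T_tau_c n es $$ (i, l - (n - 1)))"

definition diag_powr :: "real mat \<Rightarrow> real \<Rightarrow> real mat" where
  "diag_powr E p = mat (dim_row E) (dim_col E) (\<lambda>(i, j). if i = j then E $$ (i, i) powr p else 0)"

definition pos_diag :: "nat \<Rightarrow> real mat \<Rightarrow> bool" where
  "pos_diag k E = (E \<in> carrier_mat k k \<and> diagonal_mat E \<and> (\<forall>i<k. E $$ (i, i) > 0))"

definition loewner_le :: "nat \<Rightarrow> real mat \<Rightarrow> real mat \<Rightarrow> bool" where
  "loewner_le k A B = (A \<in> carrier_mat k k \<and> B \<in> carrier_mat k k \<and>
      (\<forall>x \<in> carrier_vec k. x \<bullet> ((B - A) *\<^sub>v x) \<ge> 0))"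

definition adjoint_c :: "complex mat \<Rightarrow> complex mat" where
  "adjoint_c A = mat (dim_col A) (dim_row A) (\<lambda>(i, j). cnj (A $$ (j, i)))"

text \<open>Largest singular value: square root of the largest eigenvalue of A^H A
  (whose eigenvalues are real and nonnegative).\<close>
definition max_sv :: "complex mat \<Rightarrow> real" where
  "max_sv A = sqrt (Max {x :: real. eigenvalue (adjoint_c A * A) (complex_of_real x)})"

definition hinf_norm :: "(complex \<Rightarrow> complex mat) \<Rightarrow> real" where
  "hinf_norm Phi = (SUP \<omega> :: real. max_sv (Phi (\<i> * complex_of_real \<omega>)))"

definition L_es :: "nat \<Rightarrow> (nat \<times> nat) list \<Rightarrow> real mat \<Rightarrow> real mat" where
  "L_es n es E = (D_tau n es)\<^sup>T * diag_powr E (-1) * D_tau n es"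

definition Pi_tau :: "nat \<Rightarrow> (nat \<times> nat) list \<Rightarrow> real \<Rightarrow> real \<Rightarrow> real mat \<Rightarrow> real mat
                        \<Rightarrow> complex \<Rightarrow> complex mat" where
  "Pi_tau n es \<sigma>w \<sigma>v E W s =
     (let m = length es; R = R_mat n es; L = L_es n es E;
          left = diag_powr W (1/2) * R\<^sup>T;
          A = L * R * W * R\<^sup>T;
          B1 = \<sigma>w \<cdot>\<^sub>m ((D_tau n es)\<^sup>T * diag_powr E (-1/2));
          B2 = (- \<sigma>v) \<cdot>\<^sub>m (L * R * diag_powr W (1/2));
          B = mat (n - 1) (n + m) (\<lambda>(i, j). if j < n then B1 $$ (i, j) else B2 $$ (i, j - n))
      in map_mat complex_of_real left
         * minv (s \<cdot>\<^sub>m 1\<^sub>m (n - 1) + map_mat complex_of_real A)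
         * map_mat complex_of_real B)"

end

theory Submission
  imports Defs "HOL-Analysis.Function_Topology" "HOL-Analysis.Elementary_Metric_Spaces"
begin

text \<open>Write \<open>F = D\<^sub>\<tau>\<^sup>T E\<^sup>-\<^sup>1\<^sup>/\<^sup>2\<close> and \<open>N = R W\<^sup>1\<^sup>/\<^sup>2\<close>. Then \<open>L = F F\<^sup>H = L\<^sub>e\<^sub>,\<^sub>s\<^sup>\<tau>\<close>,
  \<open>M = N N\<^sup>H = R W R\<^sup>T\<close> and \<open>\<Pi>\<^sub>\<tau>(s) = N\<^sup>H (s I + L M)\<^sup>-\<^sup>1 [\<sigma>\<^sub>w F, -\<sigma>\<^sub>v L N]\<close>; both \<open>F\<^sup>H\<close>
  and \<open>N\<^sup>H\<close> are injective since \<open>D\<^sub>\<tau>\<close> is the incidence matrix of a spanning tree and \<open>R\<close>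
  contains an identity block. On the imaginary axis the gain is largest at \<open>s = 0\<close>, so
  \<open>\<parallel>\<Pi>\<^sub>\<tau>\<parallel>\<^sub>\<infinity>\<close> is the largest singular value of
  \<open>\<Pi>\<^sub>\<tau>(0) = [\<sigma>\<^sub>w N\<^sup>H M\<^sup>-\<^sup>1 L\<^sup>-\<^sup>1 F, -\<sigma>\<^sub>v N\<^sup>H M\<^sup>-\<^sup>1 N]\<close>. Its square is \<open>\<sigma>\<^sub>v\<^sup>2\<close> plus
  \<open>\<sigma>\<^sub>w\<^sup>2\<close> times the largest value of \<open>g\<^sup>H M\<^sup>-\<^sup>1 g / g\<^sup>H L g\<close>, which decreases when \<open>L\<close> and
  \<open>M\<close> increase in the Loewner order. Decreasing \<open>E\<close> and increasing \<open>W\<close> does exactly that, so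
  \<open>E = \<epsilon>\<^sub>m\<^sub>i\<^sub>n I\<close>, \<open>W = w\<^sub>m\<^sub>a\<^sub>x I\<close> minimizes the norm.\<close>

section \<open>Complex inner products\<close>

definition cnorm2 :: "complex vec \<Rightarrow> real" where
  "cnorm2 x = Re (x \<bullet>c x)"

lemma scalar_prod_lessThan: "v \<bullet> w = (\<Sum>i<dim_vec w. v $ i * w $ i)"
  unfolding scalar_prod_def by (simp add: atLeast0LessThan)

lemma mult_mat_vec_index_sum:
  assumes "A \<in> carrier_mat r c" "x \<in> carrier_vec c" "i < r"
  shows "(A *\<^sub>v x) $ i = (\<Sum>j<c. A $$ (i, j) * x $ j)"
  using assms by (simp add: scalar_prod_lessThan)

lemma smult_mat_mult_vec:
  assumes "A \<in> carrier_mat r c" "(x :: 'a :: comm_ring vec) \<in> carrier_vec c"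
  shows "(a \<cdot>\<^sub>m A) *\<^sub>v x = a \<cdot>\<^sub>v (A *\<^sub>v x)"
  using assms by (intro eq_vecI) auto

lemma smult_one_mult_vec:
  assumes "(x :: 'a :: comm_ring_1 vec) \<in> carrier_vec k"
  shows "(a \<cdot>\<^sub>m 1\<^sub>m k) *\<^sub>v x = a \<cdot>\<^sub>v x"
  using assms by (simp add: smult_mat_mult_vec[of _ k k])

lemma cscalar_prod_lessThan:
  assumes "(x :: complex vec) \<in> carrier_vec n" "y \<in> carrier_vec n"
  shows "x \<bullet>c y = (\<Sum>i<n. x $ i * cnj (y $ i))"
  using assms by (simp add: scalar_prod_lessThan)

lemma cscalar_prod_swap:
  assumes "(x :: complex vec) \<in> carrier_vec n" "y \<in> carrier_vec n"
  shows "y \<bullet>c x = cnj (x \<bullet>c y)"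
  by (simp add: cscalar_prod_lessThan[OF assms] cscalar_prod_lessThan[OF assms(2,1)] cnj_sum mult.commute)

lemma Re_cscalar_prod_swap:
  "(x :: complex vec) \<in> carrier_vec n \<Longrightarrow> y \<in> carrier_vec n \<Longrightarrow> Re (y \<bullet>c x) = Re (x \<bullet>c y)"
  using cscalar_prod_swap[of x n y] by simp

lemma cscalar_prod_self: "x \<bullet>c x = complex_of_real (cnorm2 x)"
proof -
  have "x \<bullet>c x \<ge> 0" by auto
  then show ?thesis unfolding cnorm2_def by (simp add: less_eq_complex_def complex_eq_iff)
qed

lemma cnorm2_nonneg: "cnorm2 x \<ge> 0"
proof -
  have "x \<bullet>c x \<ge> 0" by auto
  then show ?thesis unfolding cnorm2_def by (simp add: less_eq_complex_def)
qed

lemma cnorm2_eq_0_iff: "x \<in> carrier_vec n \<Longrightarrow> cnorm2 x = 0 \<longleftrightarrow> x = 0\<^sub>v n"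
  using cscalar_prod_self[of x] conjugate_square_eq_0_vec[of x n] by auto

lemma cnorm2_pos_iff: "x \<in> carrier_vec n \<Longrightarrow> cnorm2 x > 0 \<longleftrightarrow> x \<noteq> 0\<^sub>v n"
  using cnorm2_eq_0_iff[of x n] cnorm2_nonneg[of x] by linarith

lemma cnorm2_zero[simp]: "cnorm2 (0\<^sub>v n) = 0"
  using cnorm2_eq_0_iff[of "0\<^sub>v n" n] by simp

lemma cnorm2_lessThan:
  assumes "x \<in> carrier_vec n"
  shows "cnorm2 x = (\<Sum>i<n. (cmod (x $ i))\<^sup>2)"
proof -
  have "x \<bullet>c x = (\<Sum>i<n. complex_of_real ((cmod (x $ i))\<^sup>2))"
    unfolding cscalar_prod_lessThan[OF assms assms]
    using complex_norm_square by (intro sum.cong) (auto simp del: of_real_power)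
  then show ?thesis unfolding cnorm2_def by simp
qed

lemma cscalar_prod_add_left:
  "(x :: complex vec) \<in> carrier_vec n \<Longrightarrow> y \<in> carrier_vec n \<Longrightarrow> z \<in> carrier_vec n \<Longrightarrow> (x + y) \<bullet>c z = x \<bullet>c z + y \<bullet>c z"
  by (simp add: add_scalar_prod_distrib[of _ n])

lemma cscalar_prod_add_right:
  "(x :: complex vec) \<in> carrier_vec n \<Longrightarrow> y \<in> carrier_vec n \<Longrightarrow> z \<in> carrier_vec n \<Longrightarrow> x \<bullet>c (y + z) = x \<bullet>c y + x \<bullet>c z"
  by (simp add: conjugate_add_vec[of _ n] scalar_prod_add_distrib[of _ n])

lemma cscalar_prod_diff_left:
  "(x :: complex vec) \<in> carrier_vec n \<Longrightarrow> y \<in> carrier_vec n \<Longrightarrow> z \<in> carrier_vec n \<Longrightarrow> (x - y) \<bullet>c z = x \<bullet>c z - y \<bullet>c z"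
  by (simp add: minus_scalar_prod_distrib[of _ n])

lemma cscalar_prod_diff_right:
  assumes "(x :: complex vec) \<in> carrier_vec n" "y \<in> carrier_vec n" "z \<in> carrier_vec n"
  shows "x \<bullet>c (y - z) = x \<bullet>c y - x \<bullet>c z"
proof -
  have "conjugate (y - z) = conjugate y - conjugate z"
    using assms by (intro eq_vecI) (auto simp: complex_cnj_diff)
  then show ?thesis using assms by (simp add: scalar_prod_minus_distrib[of _ n])
qed

lemma cscalar_prod_smult_right:
  "(x :: complex vec) \<in> carrier_vec n \<Longrightarrow> y \<in> carrier_vec n \<Longrightarrow> x \<bullet>c (a \<cdot>\<^sub>v y) = cnj a * (x \<bullet>c y)"
  by (simp add: conjugate_smult_vec)

lemma cnorm2_add:
  "(x :: complex vec) \<in> carrier_vec n \<Longrightarrow> y \<in> carrier_vec n \<Longrightarrow> cnorm2 (x + y) = cnorm2 x + cnorm2 y + 2 * Re (x \<bullet>c y)"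
  unfolding cnorm2_def using cscalar_prod_swap[of x n y]
  by (simp add: cscalar_prod_add_left[of _ n] cscalar_prod_add_right[of _ n])

lemma cnorm2_diff:
  "(x :: complex vec) \<in> carrier_vec n \<Longrightarrow> y \<in> carrier_vec n \<Longrightarrow> cnorm2 (x - y) = cnorm2 x + cnorm2 y - 2 * Re (x \<bullet>c y)"
  unfolding cnorm2_def using cscalar_prod_swap[of x n y]
  by (simp add: cscalar_prod_diff_left[of _ n] cscalar_prod_diff_right[of _ n])

lemma cnorm2_smult: "x \<in> carrier_vec n \<Longrightarrow> cnorm2 (complex_of_real r \<cdot>\<^sub>v x) = r\<^sup>2 * cnorm2 x"
  unfolding cnorm2_def by (simp add: cscalar_prod_smult_right[of _ n] power2_eq_square)

lemma sum_lessThan_add: "(\<Sum>j<(p::nat) + q. f j) = (\<Sum>j<p. f j) + (\<Sum>j<q. f (p + j))"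
  by (induct q) (simp_all add: add.assoc)

lemma cnorm2_append:
  assumes "a \<in> carrier_vec p" "b \<in> carrier_vec q"
  shows "cnorm2 (a @\<^sub>v b) = cnorm2 a + cnorm2 b"
  using assms by (simp add: cnorm2_lessThan[of _ "p + q"] cnorm2_lessThan[of _ p]
      cnorm2_lessThan[of _ q] sum_lessThan_add)

text \<open>Triangle and Cauchy-Schwarz inequality, \<open>(\<surd>(\<alpha>A) + \<surd>(\<beta>B))\<^sup>2 \<le> (\<alpha> + \<beta>)(A + B)\<close>, without
  square roots: the cross term is absorbed with the weight \<open>\<tau> = \<beta>/\<alpha>\<close>.\<close>
lemma cnorm2_add_le:
  assumes U: "U \<in> carrier_vec n" and V: "V \<in> carrier_vec n"
    and "\<alpha> \<ge> 0" "\<beta> \<ge> 0" "A \<ge> 0" "B \<ge> 0"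
    and hU: "cnorm2 U \<le> \<alpha> * A" and hV: "cnorm2 V \<le> \<beta> * B"
  shows "cnorm2 (U + V) \<le> (\<alpha> + \<beta>) * (A + B)"
proof (cases "\<alpha> = 0 \<or> \<beta> = 0")
  case True
  then have "U = 0\<^sub>v n \<or> V = 0\<^sub>v n"
    using hU hV cnorm2_nonneg[of U] cnorm2_nonneg[of V] cnorm2_eq_0_iff[OF U] cnorm2_eq_0_iff[OF V] by auto
  then have "U \<bullet>c V = 0" using U V by auto
  then have "cnorm2 (U + V) \<le> \<alpha> * A + \<beta> * B"
    using cnorm2_add[OF U V] hU hV by simp
  also have "\<dots> \<le> (\<alpha> + \<beta>) * (A + B)"
    using assms(3-6) by (simp add: algebra_simps)
  finally show ?thesis .
next
  case False
  with assms have "\<alpha> > 0" "\<beta> > 0" by auto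
  define \<tau> where "\<tau> = \<beta> / \<alpha>"
  have "\<tau> > 0" unfolding \<tau>_def using \<open>\<alpha> > 0\<close> \<open>\<beta> > 0\<close> by simp
  have "0 \<le> cnorm2 (complex_of_real \<tau> \<cdot>\<^sub>v U - V)" by (rule cnorm2_nonneg)
  also have "\<dots> = \<tau>\<^sup>2 * cnorm2 U + cnorm2 V - 2 * \<tau> * Re (U \<bullet>c V)"
    using cnorm2_diff[of "complex_of_real \<tau> \<cdot>\<^sub>v U" n V] U V cnorm2_smult[OF U, of \<tau>] by simp
  finally have "2 * Re (U \<bullet>c V) \<le> \<tau> * cnorm2 U + cnorm2 V / \<tau>"
    using \<open>\<tau> > 0\<close> by (simp add: field_simps power2_eq_square)
  then have "cnorm2 (U + V) \<le> (1 + \<tau>) * cnorm2 U + (1 + 1 / \<tau>) * cnorm2 V"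
    using cnorm2_add[OF U V] by (simp add: algebra_simps)
  also have "\<dots> \<le> (1 + \<tau>) * (\<alpha> * A) + (1 + 1 / \<tau>) * (\<beta> * B)"
    using hU hV \<open>\<tau> > 0\<close> by (intro add_mono mult_left_mono) auto
  also have "\<dots> = (\<alpha> + \<beta>) * (A + B)"
    unfolding \<tau>_def using \<open>\<alpha> > 0\<close> \<open>\<beta> > 0\<close> by (simp add: field_simps)
  finally show ?thesis .
qed

section \<open>Hermitian matrices and the largest singular value\<close>

lemma adjoint_c_carrier[simp]: "A \<in> carrier_mat r c \<Longrightarrow> adjoint_c A \<in> carrier_mat c r"
  unfolding adjoint_c_def by auto

lemma adjoint_c_dims[simp]: "dim_row (adjoint_c A) = dim_col A" "dim_col (adjoint_c A) = dim_row A"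
  unfolding adjoint_c_def by auto

lemma adjoint_c_index[simp]:
  "i < dim_col A \<Longrightarrow> j < dim_row A \<Longrightarrow> adjoint_c A $$ (i, j) = cnj (A $$ (j, i))"
  unfolding adjoint_c_def by auto

lemma adjoint_c_adjoint_c[simp]: "adjoint_c (adjoint_c A) = A"
  by (rule eq_matI) auto

lemma adjoint_c_mult:
  "A \<in> carrier_mat r n \<Longrightarrow> B \<in> carrier_mat n c \<Longrightarrow> adjoint_c (A * B) = adjoint_c B * adjoint_c A"
  by (intro eq_matI) (auto simp: scalar_prod_def cnj_sum mult.commute)

lemma adjoint_c_of_real:
  "adjoint_c (map_mat complex_of_real A) = map_mat complex_of_real (transpose_mat A)"
  by (rule eq_matI) auto

lemma mult_adjoint_c_cscalar_prod:
  assumes A: "A \<in> carrier_mat r c" and x: "x \<in> carrier_vec c" and y: "y \<in> carrier_vec r"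
  shows "(A *\<^sub>v x) \<bullet>c y = x \<bullet>c (adjoint_c A *\<^sub>v y)"
proof -
  have "(A *\<^sub>v x) \<bullet>c y = (\<Sum>i<r. (\<Sum>j<c. A $$ (i, j) * x $ j) * cnj (y $ i))"
    using cscalar_prod_lessThan[of "A *\<^sub>v x" r y] mult_mat_vec_index_sum[OF A x] A x y by simp
  also have "\<dots> = (\<Sum>j<c. \<Sum>i<r. A $$ (i, j) * x $ j * cnj (y $ i))"
    by (simp add: sum_distrib_right sum.swap[of _ "{..<r}"])
  also have "\<dots> = (\<Sum>j<c. x $ j * cnj (\<Sum>i<r. adjoint_c A $$ (j, i) * y $ i))"
    using A by (simp add: sum_distrib_left cnj_sum mult_ac)
  also have "\<dots> = x \<bullet>c (adjoint_c A *\<^sub>v y)"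
    using cscalar_prod_lessThan[OF x mult_mat_vec_carrier[OF adjoint_c_carrier[OF A] y]]
      mult_mat_vec_index_sum[OF adjoint_c_carrier[OF A] y] by simp
  finally show ?thesis .
qed

lemma quadratic_form_lessThan:
  assumes "H \<in> carrier_mat k k" "x \<in> carrier_vec k"
  shows "(H *\<^sub>v x) \<bullet>c x = (\<Sum>i<k. \<Sum>j<k. H $$ (i, j) * x $ j * cnj (x $ i))"
  using cscalar_prod_lessThan[of "H *\<^sub>v x" k x] mult_mat_vec_index_sum[OF assms] assms
  by (simp add: sum_distrib_right)

lemma quadratic_form_smult:
  assumes "H \<in> carrier_mat k k" "x \<in> carrier_vec k"
  shows "Re ((H *\<^sub>v (complex_of_real c \<cdot>\<^sub>v x)) \<bullet>c (complex_of_real c \<cdot>\<^sub>v x))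
    = c\<^sup>2 * Re ((H *\<^sub>v x) \<bullet>c x)"
  using assms by (simp add: mult_mat_vec cscalar_prod_smult_right[of _ k] power2_eq_square)

lemma continuous_on_coordinate[continuous_intros]:
  "continuous_on S (\<lambda>f :: nat \<Rightarrow> 'a :: topological_space. f i)"
  by (rule continuous_on_product_then_coordinatewise[OF continuous_on_id])

lemma compact_unit_sphere_coordinates:
  "compact (PiE UNIV (\<lambda>i. if i < k then cball 0 1 else {0})
    \<inter> {f :: nat \<Rightarrow> real \<times> real. (\<Sum>i<k. (norm (f i))\<^sup>2) = 1})"
proof (rule compact_Int_closed)
  have "compactin (product_topology (\<lambda>i. euclidean) UNIV)
      (PiE UNIV (\<lambda>i. if i < k then cball 0 1 else {0 :: real \<times> real}))"
    unfolding compactin_PiE by auto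
  then show "compact (PiE UNIV (\<lambda>i. if i < k then cball 0 1 else {0 :: real \<times> real}))"
    unfolding euclidean_product_topology by simp
  show "closed {f :: nat \<Rightarrow> real \<times> real. (\<Sum>i<k. (norm (f i))\<^sup>2) = 1}"
    by (intro closed_Collect_eq continuous_intros)
qed

lemma cmod_index_le_cnorm2: "x \<in> carrier_vec n \<Longrightarrow> i < n \<Longrightarrow> (cmod (x $ i))\<^sup>2 \<le> cnorm2 x"
  unfolding cnorm2_lessThan[of x n] by (intro member_le_sum) auto

text \<open>The unit sphere of \<open>\<complex>\<^sup>k\<close> is parametrised by real and imaginary parts, which live in
  a compact subset of the product space \<open>nat \<Rightarrow> real \<times> real\<close>.\<close>
lemma quadratic_form_max_on_sphere:
  assumes H: "H \<in> carrier_mat k k" and k: "0 < k"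
  obtains v where "v \<in> carrier_vec k" "cnorm2 v = 1"
    "\<And>w. w \<in> carrier_vec k \<Longrightarrow> cnorm2 w = 1 \<Longrightarrow> Re ((H *\<^sub>v w) \<bullet>c w) \<le> Re ((H *\<^sub>v v) \<bullet>c v)"
proof -
  define c :: "(nat \<Rightarrow> real \<times> real) \<Rightarrow> nat \<Rightarrow> complex" where
    "c f i = complex_of_real (fst (f i)) + \<i> * complex_of_real (snd (f i))" for f i
  define z where "z f = vec k (c f)" for f
  define S :: "(nat \<Rightarrow> real \<times> real) set" where
    "S = PiE UNIV (\<lambda>i. if i < k then cball 0 1 else {0}) \<inter> {f. (\<Sum>i<k. (norm (f i))\<^sup>2) = 1}"
  define \<phi> where "\<phi> f = Re (\<Sum>i<k. \<Sum>j<k. H $$ (i, j) * c f j * cnj (c f i))" for f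
  have \<phi>: "\<phi> f = Re ((H *\<^sub>v z f) \<bullet>c z f)" for f
    unfolding \<phi>_def z_def quadratic_form_lessThan[OF H vec_carrier] by simp
  have "(\<lambda>i. if i = 0 then (1, 0) else 0) \<in> S"
    using k by (simp add: S_def PiE_iff if_distrib[of "\<lambda>p. (norm p)\<^sup>2"] cong: if_cong)
  moreover have "continuous_on S \<phi>"
    unfolding \<phi>_def c_def by (intro continuous_intros)
  ultimately obtain f where f: "f \<in> S" and fmax: "\<And>g. g \<in> S \<Longrightarrow> \<phi> g \<le> \<phi> f"
    using continuous_attains_sup[OF compact_unit_sphere_coordinates[of k, folded S_def]] by blast
  show ?thesis
  proof
    have zc: "z f \<in> carrier_vec k" by (simp add: z_def)
    then show "z f \<in> carrier_vec k" .
    have "cmod (z f $ i) = norm (f i)" if "i < k" for i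
      using that by (simp add: z_def c_def cmod_def norm_prod_def)
    then show "cnorm2 (z f) = 1" using f by (simp add: S_def cnorm2_lessThan[OF zc])
    fix w :: "complex vec" assume w: "w \<in> carrier_vec k" "cnorm2 w = 1"
    define g where "g i = (if i < k then (Re (w $ i), Im (w $ i)) else 0)" for i
    have "norm (g i) = cmod (w $ i)" if "i < k" for i
      using that by (simp add: g_def cmod_def norm_Pair)
    then have "g \<in> S"
      using w cmod_index_le_cnorm2[OF w(1)]
      by (auto simp: S_def g_def cnorm2_lessThan[of _ k] power_le_one_iff abs_le_square_iff)
    moreover have "z g = w" using w by (intro eq_vecI) (auto simp: z_def c_def g_def complex_eq_iff)
    ultimately show "Re ((H *\<^sub>v w) \<bullet>c w) \<le> Re ((H *\<^sub>v z f) \<bullet>c z f)"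
      using fmax unfolding \<phi> by metis
  qed
qed

lemma rayleigh_quotient_max:
  assumes H: "H \<in> carrier_mat k k" and k: "0 < k"
  obtains v where "v \<in> carrier_vec k" "cnorm2 v = 1"
    "\<And>x. x \<in> carrier_vec k \<Longrightarrow> Re ((H *\<^sub>v x) \<bullet>c x) \<le> Re ((H *\<^sub>v v) \<bullet>c v) * cnorm2 x"
proof -
  obtain v where v: "v \<in> carrier_vec k" "cnorm2 v = 1"
    and vmax: "\<And>w. w \<in> carrier_vec k \<Longrightarrow> cnorm2 w = 1 \<Longrightarrow> Re ((H *\<^sub>v w) \<bullet>c w) \<le> Re ((H *\<^sub>v v) \<bullet>c v)"
    using quadratic_form_max_on_sphere[OF H k] by blast
  have "Re ((H *\<^sub>v x) \<bullet>c x) \<le> Re ((H *\<^sub>v v) \<bullet>c v) * cnorm2 x" if x: "x \<in> carrier_vec k" for x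
  proof (cases "x = 0\<^sub>v k")
    case True
    then show ?thesis using H by simp
  next
    case False
    define r where "r = sqrt (cnorm2 x)"
    have r: "r > 0" "r\<^sup>2 = cnorm2 x"
      using cnorm2_pos_iff[OF x] False cnorm2_nonneg[of x] by (auto simp: r_def)
    have "cnorm2 (complex_of_real (1 / r) \<cdot>\<^sub>v x) = (1 / r)\<^sup>2 * cnorm2 x"
      by (rule cnorm2_smult[OF x])
    then have unit: "cnorm2 (complex_of_real (1 / r) \<cdot>\<^sub>v x) = 1"
      using r(1) by (simp add: power_divide r(2)[symmetric])
    have "(1 / r)\<^sup>2 * Re ((H *\<^sub>v x) \<bullet>c x)
        = Re ((H *\<^sub>v (complex_of_real (1 / r) \<cdot>\<^sub>v x)) \<bullet>c (complex_of_real (1 / r) \<cdot>\<^sub>v x))"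
      by (rule quadratic_form_smult[OF H x, symmetric])
    also have "\<dots> \<le> Re ((H *\<^sub>v v) \<bullet>c v)"
      by (rule vmax) (use x unit in auto)
    finally show ?thesis
      using r(1) unfolding r(2)[symmetric] by (simp add: power_divide divide_le_eq mult.commute)
  qed
  with v show ?thesis using that by blast
qed

text \<open>Otherwise the form would be negative at \<open>v - t A v\<close> for small \<open>t > 0\<close>.\<close>
lemma psd_hermitian_quadratic_form_eq_0:
  assumes A: "A \<in> carrier_mat k k" and herm: "adjoint_c A = A"
    and psd: "\<And>x. x \<in> carrier_vec k \<Longrightarrow> Re ((A *\<^sub>v x) \<bullet>c x) \<ge> 0"
    and v: "v \<in> carrier_vec k" and q0: "Re ((A *\<^sub>v v) \<bullet>c v) = 0"
  shows "A *\<^sub>v v = 0\<^sub>v k"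
proof (rule ccontr)
  assume ne: "A *\<^sub>v v \<noteq> 0\<^sub>v k"
  define y where "y = A *\<^sub>v v"
  have y: "y \<in> carrier_vec k" unfolding y_def using A v by auto
  have Ay: "A *\<^sub>v y \<in> carrier_vec k" using A y by auto
  define Y where "Y = cnorm2 y"
  define Q where "Q = Re ((A *\<^sub>v y) \<bullet>c y)"
  have Ypos: "Y > 0" unfolding Y_def using cnorm2_pos_iff[OF y] ne y_def by auto
  have Qnn: "Q \<ge> 0" unfolding Q_def using psd[OF y] .
  define t where "t = Y / (Q + 1)"
  have tpos: "t > 0" unfolding t_def using Ypos Qnn by auto
  have x: "v - complex_of_real t \<cdot>\<^sub>v y \<in> carrier_vec k" using v y by auto
  have Ax: "A *\<^sub>v (v - complex_of_real t \<cdot>\<^sub>v y) = y - complex_of_real t \<cdot>\<^sub>v (A *\<^sub>v y)"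
    unfolding y_def using A v y_def y by (simp add: mult_minus_distrib_mat_vec[OF A v] mult_mat_vec[OF A])
  have c1: "(A *\<^sub>v y) \<bullet>c v = y \<bullet>c y"
    using mult_adjoint_c_cscalar_prod[OF A y v] herm y_def by simp
  have "(A *\<^sub>v (v - complex_of_real t \<cdot>\<^sub>v y)) \<bullet>c (v - complex_of_real t \<cdot>\<^sub>v y)
     = (y \<bullet>c v - complex_of_real t * ((A *\<^sub>v y) \<bullet>c v))
       - (complex_of_real t * (y \<bullet>c y) - complex_of_real t * complex_of_real t * ((A *\<^sub>v y) \<bullet>c y))"
    unfolding Ax using y v Ay
    by (simp add: cscalar_prod_diff_left[of _ k] cscalar_prod_diff_right[of _ k]
        cscalar_prod_smult_right[of _ k] algebra_simps)
  also have "y \<bullet>c v = (A *\<^sub>v v) \<bullet>c v" unfolding y_def ..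
  finally have "Re ((A *\<^sub>v (v - complex_of_real t \<cdot>\<^sub>v y)) \<bullet>c (v - complex_of_real t \<cdot>\<^sub>v y))
     = - 2 * t * Y + t * t * Q"
    using q0 c1 unfolding Y_def Q_def cnorm2_def by simp
  moreover have "- 2 * t * Y + t * t * Q < 0"
  proof -
    have "t * Q < Y" unfolding t_def using Ypos Qnn by (simp add: field_simps)
    then have "t * (t * Q) < t * Y" using tpos by simp
    then show ?thesis using tpos Ypos by (simp add: algebra_simps)
  qed
  ultimately show False using psd[OF x] by simp
qed

lemma hermitian_max_eigenvalue:
  assumes H: "H \<in> carrier_mat k k" and k: "0 < k" and herm: "adjoint_c H = H"
  obtains \<mu> v where "v \<in> carrier_vec k" "v \<noteq> 0\<^sub>v k" "H *\<^sub>v v = complex_of_real \<mu> \<cdot>\<^sub>v v"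
    "\<And>x. x \<in> carrier_vec k \<Longrightarrow> Re ((H *\<^sub>v x) \<bullet>c x) \<le> \<mu> * cnorm2 x"
proof -
  obtain v where v: "v \<in> carrier_vec k" "cnorm2 v = 1"
    and ray: "\<And>x. x \<in> carrier_vec k \<Longrightarrow> Re ((H *\<^sub>v x) \<bullet>c x) \<le> Re ((H *\<^sub>v v) \<bullet>c v) * cnorm2 x"
    using rayleigh_quotient_max[OF H k] by blast
  define \<mu> where "\<mu> = Re ((H *\<^sub>v v) \<bullet>c v)"
  define A where "A = complex_of_real \<mu> \<cdot>\<^sub>m 1\<^sub>m k - H"
  have A: "A \<in> carrier_mat k k" unfolding A_def using H by auto
  have Ax: "A *\<^sub>v x = complex_of_real \<mu> \<cdot>\<^sub>v x - H *\<^sub>v x" if "x \<in> carrier_vec k" for x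
    unfolding A_def using H that by (simp add: minus_mult_distrib_mat_vec[of _ k k] smult_one_mult_vec)
  have "A *\<^sub>v v = 0\<^sub>v k"
  proof (rule psd_hermitian_quadratic_form_eq_0[OF A _ _ v(1)])
    have "cnj (H $$ (j, i)) = H $$ (i, j)" if "i < k" "j < k" for i j
      using arg_cong[OF herm, of "\<lambda>M. M $$ (i, j)"] H that by simp
    then show "adjoint_c A = A"
      unfolding A_def using H by (intro eq_matI) auto
    show "Re ((A *\<^sub>v x) \<bullet>c x) \<ge> 0" if "x \<in> carrier_vec k" for x
      using ray[OF that] that H
      by (simp add: Ax cscalar_prod_diff_left[of _ k] cscalar_prod_self \<mu>_def)
    show "Re ((A *\<^sub>v v) \<bullet>c v) = 0"
      using v H by (simp add: Ax cscalar_prod_diff_left[of _ k] cscalar_prod_self \<mu>_def)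
  qed
  then have eq: "complex_of_real \<mu> \<cdot>\<^sub>v v - H *\<^sub>v v = 0\<^sub>v k" using Ax[OF v(1)] by simp
  have "H *\<^sub>v v = complex_of_real \<mu> \<cdot>\<^sub>v v"
  proof (rule eq_vecI)
    fix i assume "i < dim_vec (complex_of_real \<mu> \<cdot>\<^sub>v v)"
    then have "i < k" using v by simp
    then have "(complex_of_real \<mu> \<cdot>\<^sub>v v - H *\<^sub>v v) $ i = 0" using eq by simp
    then show "(H *\<^sub>v v) $ i = (complex_of_real \<mu> \<cdot>\<^sub>v v) $ i" using \<open>i < k\<close> H v by simp
  qed (use H v in simp)
  moreover have "v \<noteq> 0\<^sub>v k" using v(2) by (metis cnorm2_zero zero_neq_one)
  ultimately show ?thesis using that v(1) ray[folded \<mu>_def] by blast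
qed

lemma cnorm2_mult_vec_eq_quadratic_form:
  assumes A: "A \<in> carrier_mat r c" and y: "y \<in> carrier_vec c"
  shows "cnorm2 (A *\<^sub>v y) = Re (((adjoint_c A * A) *\<^sub>v y) \<bullet>c y)"
proof -
  have "(adjoint_c A * A) *\<^sub>v y = adjoint_c A *\<^sub>v (A *\<^sub>v y)"
    using A y by (simp add: assoc_mult_mat_vec[of _ c r _ c])
  then show ?thesis
    using mult_adjoint_c_cscalar_prod[OF adjoint_c_carrier[OF A] _ y, of "A *\<^sub>v y"] A y
    by (simp add: cnorm2_def)
qed

lemma finite_real_eigenvalues:
  assumes "H \<in> carrier_mat c c"
  shows "finite {x :: real. eigenvalue H (complex_of_real x)}"
proof -
  have "char_poly H \<noteq> 0" using degree_monic_char_poly[OF assms] by auto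
  then have "finite {z. poly (char_poly H) z = 0}" by (rule poly_roots_finite)
  moreover have "{x. eigenvalue H (complex_of_real x)} = complex_of_real -` {z. poly (char_poly H) z = 0}"
    using eigenvalue_root_char_poly[OF assms] by auto
  ultimately show ?thesis
    using finite_vimageI[of "{z. poly (char_poly H) z = 0}" complex_of_real] by (simp add: inj_on_def)
qed

text \<open>The largest eigenvalue of \<open>A\<^sup>H A\<close> is the maximum of the Rayleigh quotient of
  \<open>A\<^sup>H A\<close>, i.e. the best constant in \<open>\<parallel>A y\<parallel>\<^sup>2 \<le> \<mu> \<parallel>y\<parallel>\<^sup>2\<close>, and it is attained.\<close>
lemma max_sv_sq_bound:
  assumes A: "A \<in> carrier_mat r c" and c: "0 < c"
  obtains \<mu> v where "max_sv A = sqrt \<mu>" "\<mu> \<ge> 0" "v \<in> carrier_vec c" "v \<noteq> 0\<^sub>v c"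
    "cnorm2 (A *\<^sub>v v) = \<mu> * cnorm2 v"
    "\<And>y. y \<in> carrier_vec c \<Longrightarrow> cnorm2 (A *\<^sub>v y) \<le> \<mu> * cnorm2 y"
proof -
  define H where "H = adjoint_c A * A"
  have H: "H \<in> carrier_mat c c" unfolding H_def using A by auto
  have "adjoint_c H = H" unfolding H_def using adjoint_c_mult[OF adjoint_c_carrier[OF A] A] by simp
  then obtain \<mu> v where v: "v \<in> carrier_vec c" "v \<noteq> 0\<^sub>v c"
    and Hv: "H *\<^sub>v v = complex_of_real \<mu> \<cdot>\<^sub>v v"
    and ray: "\<And>x. x \<in> carrier_vec c \<Longrightarrow> Re ((H *\<^sub>v x) \<bullet>c x) \<le> \<mu> * cnorm2 x"
    using hermitian_max_eigenvalue[OF H c] by blast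
  have quad: "Re ((H *\<^sub>v y) \<bullet>c y) = cnorm2 (A *\<^sub>v y)" if "y \<in> carrier_vec c" for y
    unfolding H_def cnorm2_mult_vec_eq_quadratic_form[OF A that] ..
  have eig: "Re ((H *\<^sub>v w) \<bullet>c w) = x * cnorm2 w"
    if "w \<in> carrier_vec c" "H *\<^sub>v w = complex_of_real x \<cdot>\<^sub>v w" for w x
    using that by (simp add: cnorm2_def)
  have "Max {x. eigenvalue H (complex_of_real x)} = \<mu>"
  proof (rule Max_eqI[OF finite_real_eigenvalues[OF H]])
    show "\<mu> \<in> {x. eigenvalue H (complex_of_real x)}"
      using v Hv H by (auto simp: eigenvalue_def eigenvector_def)
    fix x assume "x \<in> {x. eigenvalue H (complex_of_real x)}"
    then obtain w where w: "w \<in> carrier_vec c" "w \<noteq> 0\<^sub>v c" "H *\<^sub>v w = complex_of_real x \<cdot>\<^sub>v w"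
      using H by (auto simp: eigenvalue_def eigenvector_def)
    then have "x * cnorm2 w \<le> \<mu> * cnorm2 w" using ray[OF w(1)] eig[OF w(1,3)] by linarith
    then show "x \<le> \<mu>" using cnorm2_pos_iff[OF w(1)] w(2) by simp
  qed
  then have "max_sv A = sqrt \<mu>" unfolding max_sv_def H_def by simp
  moreover have "cnorm2 (A *\<^sub>v v) = \<mu> * cnorm2 v" using eig[OF v(1) Hv] quad[OF v(1)] by simp
  moreover have "\<mu> \<ge> 0"
    using calculation(2) cnorm2_nonneg[of "A *\<^sub>v v"] cnorm2_pos_iff[OF v(1)] v(2)
    by (simp add: zero_le_mult_iff)
  ultimately show ?thesis using that v ray quad by simp
qed

lemma max_sv_nonneg:
  assumes "A \<in> carrier_mat r c" "0 < c"
  shows "max_sv A \<ge> 0"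
proof -
  obtain \<mu> v where "max_sv A = sqrt \<mu>" "\<mu> \<ge> 0" "v \<in> carrier_vec c" "v \<noteq> 0\<^sub>v c"
    "cnorm2 (A *\<^sub>v v) = \<mu> * cnorm2 v"
    "\<And>y. y \<in> carrier_vec c \<Longrightarrow> cnorm2 (A *\<^sub>v y) \<le> \<mu> * cnorm2 y"
    using max_sv_sq_bound[OF assms] by blast
  then show ?thesis by simp
qed

lemma cnorm2_mult_vec_le_max_sv:
  assumes "A \<in> carrier_mat r c" "0 < c" "y \<in> carrier_vec c"
  shows "cnorm2 (A *\<^sub>v y) \<le> (max_sv A)\<^sup>2 * cnorm2 y"
proof -
  obtain \<mu> v where "max_sv A = sqrt \<mu>" "\<mu> \<ge> 0" "v \<in> carrier_vec c" "v \<noteq> 0\<^sub>v c"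
    "cnorm2 (A *\<^sub>v v) = \<mu> * cnorm2 v"
    and bound: "\<And>y. y \<in> carrier_vec c \<Longrightarrow> cnorm2 (A *\<^sub>v y) \<le> \<mu> * cnorm2 y"
    using max_sv_sq_bound[OF assms(1,2)] by blast
  then show ?thesis using bound[OF assms(3)] by simp
qed

lemma max_sv_le:
  assumes "A \<in> carrier_mat r c" "0 < c" "C \<ge> 0"
    and bound: "\<And>y. y \<in> carrier_vec c \<Longrightarrow> cnorm2 (A *\<^sub>v y) \<le> C\<^sup>2 * cnorm2 y"
  shows "max_sv A \<le> C"
proof -
  obtain \<mu> v where \<mu>: "max_sv A = sqrt \<mu>" and "\<mu> \<ge> 0" and v: "v \<in> carrier_vec c" "v \<noteq> 0\<^sub>v c"
    and Av: "cnorm2 (A *\<^sub>v v) = \<mu> * cnorm2 v"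
    and "\<And>y. y \<in> carrier_vec c \<Longrightarrow> cnorm2 (A *\<^sub>v y) \<le> \<mu> * cnorm2 y"
    using max_sv_sq_bound[OF assms(1,2)] by blast
  have "\<mu> * cnorm2 v \<le> C\<^sup>2 * cnorm2 v" using bound[OF v(1)] Av by simp
  then have "\<mu> \<le> C\<^sup>2" using cnorm2_pos_iff[OF v(1)] v(2) by simp
  then show ?thesis unfolding \<mu> using \<open>C \<ge> 0\<close> real_sqrt_le_mono[of \<mu> "C\<^sup>2"] by simp
qed

lemma vec_eq_iff_diff_eq_0:
  "(a :: 'a :: ab_group_add vec) \<in> carrier_vec n \<Longrightarrow> b \<in> carrier_vec n \<Longrightarrow> a - b = 0\<^sub>v n \<longleftrightarrow> a = b"
  by (auto simp: vec_eq_iff)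

lemma mult_mat_vec_zero: "A \<in> carrier_mat r c \<Longrightarrow> A *\<^sub>v 0\<^sub>v c = (0\<^sub>v r :: 'a :: semiring_0 vec)"
  by (intro eq_vecI) auto

lemma mult_mat_vec_cancel:
  assumes A: "(A :: 'a :: comm_ring mat) \<in> carrier_mat r c"
    and ker: "\<And>z. z \<in> carrier_vec c \<Longrightarrow> A *\<^sub>v z = 0\<^sub>v r \<Longrightarrow> z = 0\<^sub>v c"
    and a: "a \<in> carrier_vec c" and b: "b \<in> carrier_vec c" and eq: "A *\<^sub>v a = A *\<^sub>v b"
  shows "a = b"
proof -
  have "A *\<^sub>v (a - b) = 0\<^sub>v r"
    using mult_minus_distrib_mat_vec[OF A a b] eq vec_eq_iff_diff_eq_0[of "A *\<^sub>v a" r] A b by simp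
  then show ?thesis using ker[of "a - b"] a b vec_eq_iff_diff_eq_0[OF a b] by simp
qed

lemma mult_mat_vec_kernel_of_transpose:
  assumes A: "(A :: 'a :: idom mat) \<in> carrier_mat k k"
    and ker: "\<And>z. z \<in> carrier_vec k \<Longrightarrow> transpose_mat A *\<^sub>v z = 0\<^sub>v k \<Longrightarrow> z = 0\<^sub>v k"
    and x: "x \<in> carrier_vec k" and Ax: "A *\<^sub>v x = 0\<^sub>v k"
  shows "x = 0\<^sub>v k"
proof -
  have "det (transpose_mat A) \<noteq> 0"
    using det_0_iff_vec_prod_zero[of "transpose_mat A" k] A ker by auto
  then show ?thesis
    using det_0_iff_vec_prod_zero[OF A] det_transpose[OF A] x Ax by auto
qed

lemma minv_inverse:
  assumes A: "(A :: 'a :: field mat) \<in> carrier_mat k k"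
    and ker: "\<And>z. z \<in> carrier_vec k \<Longrightarrow> A *\<^sub>v z = 0\<^sub>v k \<Longrightarrow> z = 0\<^sub>v k"
  shows "minv A \<in> carrier_mat k k" "A * minv A = 1\<^sub>m k" "minv A * A = 1\<^sub>m k"
proof -
  have "det A \<noteq> 0" using det_0_iff_vec_prod_zero[OF A] ker by auto
  then have "A \<in> Units (ring_mat TYPE('a) k undefined)" by (rule det_non_zero_imp_unit[OF A])
  then obtain B where "mat_inverse A = Some B"
    using mat_inverse(1)[OF A, of undefined] by (cases "mat_inverse A") auto
  then have B: "B \<in> carrier_mat k k \<and> A * B = 1\<^sub>m k \<and> B * A = 1\<^sub>m k" using mat_inverse(2)[OF A] by auto
  have "minv A \<in> carrier_mat (dim_row A) (dim_row A) \<and> A * minv A = 1\<^sub>m (dim_row A)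
      \<and> minv A * A = 1\<^sub>m (dim_row A)"
    unfolding minv_def by (rule someI[of _ B]) (use A B in simp)
  then show "minv A \<in> carrier_mat k k" "A * minv A = 1\<^sub>m k" "minv A * A = 1\<^sub>m k"
    using A by auto
qed

lemma minv_mult_vec_eq:
  assumes A: "(A :: 'a :: field mat) \<in> carrier_mat k k"
    and ker: "\<And>z. z \<in> carrier_vec k \<Longrightarrow> A *\<^sub>v z = 0\<^sub>v k \<Longrightarrow> z = 0\<^sub>v k"
    and z: "z \<in> carrier_vec k" and Az: "A *\<^sub>v z = u"
  shows "minv A *\<^sub>v u = z"
proof -
  have "minv A *\<^sub>v u = (minv A * A) *\<^sub>v z" unfolding Az[symmetric] using minv_inverse[OF A ker] A z
    by (intro assoc_mult_mat_vec[symmetric, of _ k k _ k]) auto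
  then show ?thesis using minv_inverse[OF A ker] z by simp
qed

lemma solve_via_minv:
  assumes A: "(A :: 'a :: field mat) \<in> carrier_mat k k"
    and ker: "\<And>z. z \<in> carrier_vec k \<Longrightarrow> A *\<^sub>v z = 0\<^sub>v k \<Longrightarrow> z = 0\<^sub>v k"
    and u: "u \<in> carrier_vec k"
  obtains z where "z \<in> carrier_vec k" "A *\<^sub>v z = u" "minv A *\<^sub>v u = z"
proof
  show "minv A *\<^sub>v u \<in> carrier_vec k" using minv_inverse[OF A ker] u by auto
  have "A *\<^sub>v (minv A *\<^sub>v u) = (A * minv A) *\<^sub>v u" using minv_inverse[OF A ker] A u
    by (intro assoc_mult_mat_vec[symmetric, of _ k k _ k]) auto
  then show "A *\<^sub>v (minv A *\<^sub>v u) = u" using minv_inverse[OF A ker] u by simp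
qed simp

definition append_cols :: "'a :: zero mat \<Rightarrow> 'a mat \<Rightarrow> 'a mat" where
  "append_cols A B = mat (dim_row A) (dim_col A + dim_col B)
     (\<lambda>(i, j). if j < dim_col A then A $$ (i, j) else B $$ (i, j - dim_col A))"

lemma dim_append_cols[simp]:
  "dim_row (append_cols A B) = dim_row A" "dim_col (append_cols A B) = dim_col A + dim_col B"
  unfolding append_cols_def by simp_all

lemma append_cols_carrier[simp]:
  "A \<in> carrier_mat k p \<Longrightarrow> B \<in> carrier_mat k q \<Longrightarrow> append_cols A B \<in> carrier_mat k (p + q)"
  unfolding append_cols_def by auto

lemma map_mat_append_cols:
  "dim_row B = dim_row A \<Longrightarrow> map_mat f (append_cols A B) = append_cols (map_mat f A) (map_mat f B)"
  unfolding append_cols_def by (intro eq_matI) auto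

lemma append_cols_mult_append_vec:
  assumes A: "(A :: 'a :: comm_ring mat) \<in> carrier_mat k p" and B: "B \<in> carrier_mat k q"
    and a: "a \<in> carrier_vec p" and b: "b \<in> carrier_vec q"
  shows "append_cols A B *\<^sub>v (a @\<^sub>v b) = A *\<^sub>v a + B *\<^sub>v b"
proof (rule eq_vecI)
  fix i assume "i < dim_vec (A *\<^sub>v a + B *\<^sub>v b)"
  then have i: "i < k" using B by simp
  have "(append_cols A B *\<^sub>v (a @\<^sub>v b)) $ i
      = (\<Sum>j<p + q. append_cols A B $$ (i, j) * (a @\<^sub>v b) $ j)"
    using mult_mat_vec_index_sum[of "append_cols A B" k "p + q" "a @\<^sub>v b" i] A B a b i by simp
  also have "\<dots> = (\<Sum>j<p. A $$ (i, j) * a $ j) + (\<Sum>j<q. B $$ (i, j) * b $ j)"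
    unfolding sum_lessThan_add using A B a b i
    by (auto intro!: sum.cong arg_cong2[where f = "(+)"] simp: append_cols_def)
  also have "\<dots> = (A *\<^sub>v a + B *\<^sub>v b) $ i"
    using mult_mat_vec_index_sum[OF A a i] mult_mat_vec_index_sum[OF B b i] A B i by simp
  finally show "(append_cols A B *\<^sub>v (a @\<^sub>v b)) $ i = (A *\<^sub>v a + B *\<^sub>v b) $ i" .
qed (use A B in auto)

lemma adjoint_c_mult_vec_carrier[simp]:
  "F \<in> carrier_mat k p \<Longrightarrow> z \<in> carrier_vec k \<Longrightarrow> adjoint_c F *\<^sub>v z \<in> carrier_vec p"
  by (rule mult_mat_vec_carrier[OF adjoint_c_carrier])

lemma gram_carrier[simp]: "F \<in> carrier_mat k p \<Longrightarrow> F * adjoint_c F \<in> carrier_mat k k"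
  by (rule mult_carrier_mat[OF _ adjoint_c_carrier])

lemma gram_mult_vec_carrier[simp]:
  "F \<in> carrier_mat k p \<Longrightarrow> z \<in> carrier_vec k \<Longrightarrow> (F * adjoint_c F) *\<^sub>v z \<in> carrier_vec k"
  by (rule mult_mat_vec_carrier[OF gram_carrier])

lemma gram_mult_vec:
  "F \<in> carrier_mat k p \<Longrightarrow> z \<in> carrier_vec k \<Longrightarrow> (F * adjoint_c F) *\<^sub>v z = F *\<^sub>v (adjoint_c F *\<^sub>v z)"
  by (rule assoc_mult_mat_vec) auto

lemma cscalar_prod_adjoint_mult_vec:
  assumes F: "F \<in> carrier_mat k p" and a: "a \<in> carrier_vec k" and b: "b \<in> carrier_vec k"
  shows "(adjoint_c F *\<^sub>v a) \<bullet>c (adjoint_c F *\<^sub>v b) = a \<bullet>c ((F * adjoint_c F) *\<^sub>v b)"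
  using mult_adjoint_c_cscalar_prod[OF adjoint_c_carrier[OF F] a, of "adjoint_c F *\<^sub>v b"] F b
  by (simp add: gram_mult_vec[OF F b])

lemma gram_quadratic_form:
  assumes F: "F \<in> carrier_mat k p" and z: "z \<in> carrier_vec k"
  shows "z \<bullet>c ((F * adjoint_c F) *\<^sub>v z) = complex_of_real (cnorm2 (adjoint_c F *\<^sub>v z))"
    and "((F * adjoint_c F) *\<^sub>v z) \<bullet>c z = complex_of_real (cnorm2 (adjoint_c F *\<^sub>v z))"
proof -
  show *: "z \<bullet>c ((F * adjoint_c F) *\<^sub>v z) = complex_of_real (cnorm2 (adjoint_c F *\<^sub>v z))"
    using cscalar_prod_adjoint_mult_vec[OF F z z] by (simp add: cscalar_prod_self)
  show "((F * adjoint_c F) *\<^sub>v z) \<bullet>c z = complex_of_real (cnorm2 (adjoint_c F *\<^sub>v z))"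
    using cscalar_prod_swap[OF z gram_mult_vec_carrier[OF F z]] * by simp
qed

lemma gram_kernel:
  assumes F: "F \<in> carrier_mat k p"
    and ker: "\<And>x. x \<in> carrier_vec k \<Longrightarrow> adjoint_c F *\<^sub>v x = 0\<^sub>v p \<Longrightarrow> x = 0\<^sub>v k"
    and z: "z \<in> carrier_vec k" and "(F * adjoint_c F) *\<^sub>v z = 0\<^sub>v k"
  shows "z = 0\<^sub>v k"
proof -
  have "cnorm2 (adjoint_c F *\<^sub>v z) = 0" using gram_quadratic_form(2)[OF F z] assms(4) z by simp
  then show ?thesis using cnorm2_eq_0_iff[of "adjoint_c F *\<^sub>v z" p] ker[OF z] F z by simp
qed

text \<open>If \<open>F F\<^sup>H g = F a\<close> then \<open>F\<^sup>H g\<close> is the orthogonal projection of \<open>a\<close> onto the range of \<open>F\<^sup>H\<close>.\<close>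
lemma cnorm2_adjoint_mult_vec_le:
  assumes F: "F \<in> carrier_mat k p" and a: "a \<in> carrier_vec p" and g: "g \<in> carrier_vec k"
    and eq: "(F * adjoint_c F) *\<^sub>v g = F *\<^sub>v a"
  shows "cnorm2 (adjoint_c F *\<^sub>v g) \<le> cnorm2 a"
proof -
  define Y where "Y = adjoint_c F *\<^sub>v g"
  have Y: "Y \<in> carrier_vec p" unfolding Y_def using F g by simp
  have "Re (g \<bullet>c (F *\<^sub>v a)) = cnorm2 Y"
    using gram_quadratic_form(1)[OF F g] unfolding eq Y_def by simp
  moreover have "Re (g \<bullet>c (F *\<^sub>v a)) = Re (a \<bullet>c Y)"
    using mult_adjoint_c_cscalar_prod[OF F a g] Re_cscalar_prod_swap[of "F *\<^sub>v a" k g] F a g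
    unfolding Y_def by simp
  ultimately have "cnorm2 (a - Y) = cnorm2 a - cnorm2 Y" using cnorm2_diff[OF a Y] by simp
  then show ?thesis using cnorm2_nonneg[of "a - Y"] Y_def by simp
qed

text \<open>Operator antitonicity of the inverse: \<open>N\<^sub>2 N\<^sub>2\<^sup>H \<preceq> N\<^sub>1 N\<^sub>1\<^sup>H\<close> implies
  \<open>g\<^sup>H (N\<^sub>1 N\<^sub>1\<^sup>H)\<^sup>-\<^sup>1 g \<le> g\<^sup>H (N\<^sub>2 N\<^sub>2\<^sup>H)\<^sup>-\<^sup>1 g\<close>.\<close>
lemma gram_solution_antimono:
  assumes N1: "N1 \<in> carrier_mat k q" and N2: "N2 \<in> carrier_mat k q"
    and le: "\<And>x. x \<in> carrier_vec k \<Longrightarrow> cnorm2 (adjoint_c N2 *\<^sub>v x) \<le> cnorm2 (adjoint_c N1 *\<^sub>v x)"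
    and h1: "h1 \<in> carrier_vec k" and h2: "h2 \<in> carrier_vec k"
    and eq1: "(N1 * adjoint_c N1) *\<^sub>v h1 = g" and eq2: "(N2 * adjoint_c N2) *\<^sub>v h2 = g"
  shows "cnorm2 (adjoint_c N1 *\<^sub>v h1) \<le> cnorm2 (adjoint_c N2 *\<^sub>v h2)"
proof -
  define u1 where "u1 = adjoint_c N2 *\<^sub>v h1"
  define u2 where "u2 = adjoint_c N2 *\<^sub>v h2"
  have u: "u1 \<in> carrier_vec q" "u2 \<in> carrier_vec q" using N2 h1 h2 by (simp_all add: u1_def u2_def)
  have "Re (u1 \<bullet>c u2) = cnorm2 (adjoint_c N1 *\<^sub>v h1)"
    using cscalar_prod_adjoint_mult_vec[OF N2 h1 h2] gram_quadratic_form(1)[OF N1 h1]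
    unfolding u1_def u2_def eq1 eq2 by simp
  moreover have "0 \<le> cnorm2 (u2 - u1)" by (rule cnorm2_nonneg)
  ultimately show ?thesis
    using cnorm2_diff[OF u(2,1)] Re_cscalar_prod_swap[OF u] le[OF h1] unfolding u1_def u2_def by simp
qed

section \<open>A factored feedback system\<close>

text \<open>With \<open>F = D\<^sub>\<tau>\<^sup>T E\<^sup>-\<^sup>1\<^sup>/\<^sup>2\<close> and \<open>N = R W\<^sup>1\<^sup>/\<^sup>2\<close> one has \<open>F F\<^sup>H = L\<^sub>e\<^sub>,\<^sub>s\<^sup>\<tau>\<close> and
  \<open>N N\<^sup>H = R W R\<^sup>T\<close>, so \<open>transfer\<close> below is \<open>\<Pi>\<^sub>\<tau>(E, W)\<close>.\<close>
locale factored_system =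
  fixes k p q :: nat and F N :: "complex mat" and \<sigma>w \<sigma>v :: real
  assumes F_carrier: "F \<in> carrier_mat k p" and N_carrier: "N \<in> carrier_mat k q"
    and F_adjoint_kernel: "\<And>x. x \<in> carrier_vec k \<Longrightarrow> adjoint_c F *\<^sub>v x = 0\<^sub>v p \<Longrightarrow> x = 0\<^sub>v k"
    and N_adjoint_kernel: "\<And>x. x \<in> carrier_vec k \<Longrightarrow> adjoint_c N *\<^sub>v x = 0\<^sub>v q \<Longrightarrow> x = 0\<^sub>v k"
begin

abbreviation L where "L \<equiv> F * adjoint_c F"
abbreviation M where "M \<equiv> N * adjoint_c N"

definition loop_mat :: "complex \<Rightarrow> complex mat" where
  "loop_mat s = s \<cdot>\<^sub>m 1\<^sub>m k + L * M"

definition input_mat :: "complex mat" where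
  "input_mat = append_cols (complex_of_real \<sigma>w \<cdot>\<^sub>m F) (complex_of_real (- \<sigma>v) \<cdot>\<^sub>m (L * N))"

definition transfer :: "complex \<Rightarrow> complex mat" where
  "transfer s = adjoint_c N * minv (loop_mat s) * input_mat"

lemma L_carrier[simp]: "L \<in> carrier_mat k k"
  by (rule gram_carrier[OF F_carrier])

lemma M_carrier[simp]: "M \<in> carrier_mat k k"
  by (rule gram_carrier[OF N_carrier])

lemma LM_carrier[simp]: "L * M \<in> carrier_mat k k"
  by (rule mult_carrier_mat[OF L_carrier M_carrier])

lemma LN_carrier[simp]: "L * N \<in> carrier_mat k q"
  by (rule mult_carrier_mat[OF L_carrier N_carrier])

lemma F_N_dims[simp]: "dim_row F = k" "dim_col F = p" "dim_row N = k" "dim_col N = q"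
  using carrier_matD[OF F_carrier] carrier_matD[OF N_carrier] by simp_all

declare F_carrier[simp] N_carrier[simp]

lemma adjoint_carrier[simp]: "adjoint_c F \<in> carrier_mat p k" "adjoint_c N \<in> carrier_mat q k"
  by simp_all

lemma factor_mult_vec_carrier[simp]:
  "x \<in> carrier_vec p \<Longrightarrow> F *\<^sub>v x \<in> carrier_vec k"
  "y \<in> carrier_vec q \<Longrightarrow> N *\<^sub>v y \<in> carrier_vec k"
  "z \<in> carrier_vec k \<Longrightarrow> adjoint_c F *\<^sub>v z \<in> carrier_vec p"
  "z \<in> carrier_vec k \<Longrightarrow> adjoint_c N *\<^sub>v z \<in> carrier_vec q"
  "z \<in> carrier_vec k \<Longrightarrow> L *\<^sub>v z \<in> carrier_vec k"
  "z \<in> carrier_vec k \<Longrightarrow> M *\<^sub>v z \<in> carrier_vec k"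
  using mult_mat_vec_carrier[OF F_carrier] mult_mat_vec_carrier[OF N_carrier]
    mult_mat_vec_carrier[OF adjoint_c_carrier[OF F_carrier]]
    mult_mat_vec_carrier[OF adjoint_c_carrier[OF N_carrier]]
    mult_mat_vec_carrier[OF L_carrier] mult_mat_vec_carrier[OF M_carrier] by simp_all

lemma loop_mat_carrier[simp]: "loop_mat s \<in> carrier_mat k k"
  unfolding loop_mat_def using LM_carrier by simp

lemma input_mat_carrier[simp]: "input_mat \<in> carrier_mat k (p + q)"
  unfolding input_mat_def using F_carrier LN_carrier by (intro append_cols_carrier) simp_all

lemma L_kernel: "z \<in> carrier_vec k \<Longrightarrow> L *\<^sub>v z = 0\<^sub>v k \<Longrightarrow> z = 0\<^sub>v k"
  using gram_kernel[OF F_carrier F_adjoint_kernel] by blast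

lemma M_kernel: "z \<in> carrier_vec k \<Longrightarrow> M *\<^sub>v z = 0\<^sub>v k \<Longrightarrow> z = 0\<^sub>v k"
  using gram_kernel[OF N_carrier N_adjoint_kernel] by blast

lemma input_dim_pos:
  assumes "0 < k" shows "0 < p"
proof (rule ccontr)
  assume "\<not> 0 < p"
  then have F0: "adjoint_c F *\<^sub>v unit_vec k 0 = 0\<^sub>v p" by (intro eq_vecI) simp_all
  have "(unit_vec k 0 :: complex vec) = 0\<^sub>v k" by (rule F_adjoint_kernel[OF _ F0]) simp
  then show False using assms by (metis index_unit_vec(1) index_zero_vec(1) zero_neq_one)
qed

lemma loop_mat_mult_vec:
  assumes z: "z \<in> carrier_vec k"
  shows "loop_mat s *\<^sub>v z = s \<cdot>\<^sub>v z + L *\<^sub>v (M *\<^sub>v z)"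
proof -
  have "loop_mat s *\<^sub>v z = (s \<cdot>\<^sub>m 1\<^sub>m k) *\<^sub>v z + (L * M) *\<^sub>v z"
    unfolding loop_mat_def by (rule add_mult_distrib_mat_vec[of _ k k]) (use z in simp_all)
  then show ?thesis using z by (simp add: smult_one_mult_vec assoc_mult_mat_vec[of _ k k _ k])
qed

lemma loop_mat_0_mult_vec: "z \<in> carrier_vec k \<Longrightarrow> loop_mat 0 *\<^sub>v z = L *\<^sub>v (M *\<^sub>v z)"
  by (auto simp: loop_mat_mult_vec vec_eq_iff)

text \<open>For imaginary \<open>s\<close> the quadratic form of \<open>loop_mat s\<close> at \<open>M z\<close> has the real part
  \<open>\<parallel>F\<^sup>H M z\<parallel>\<^sup>2\<close>.\<close>
lemma loop_mat_kernel:
  assumes s: "Re s = 0" and z: "z \<in> carrier_vec k" and Xz: "loop_mat s *\<^sub>v z = 0\<^sub>v k"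
  shows "z = 0\<^sub>v k"
proof -
  define w where "w = M *\<^sub>v z"
  have w: "w \<in> carrier_vec k" unfolding w_def using z by simp
  have "0 = (loop_mat s *\<^sub>v z) \<bullet>c w" unfolding Xz using w by simp
  also have "\<dots> = s * (z \<bullet>c w) + (L *\<^sub>v w) \<bullet>c w"
    unfolding loop_mat_mult_vec[OF z] w_def[symmetric] using z w by (simp add: cscalar_prod_add_left[of _ k])
  also have "\<dots> = s * complex_of_real (cnorm2 (adjoint_c N *\<^sub>v z)) + complex_of_real (cnorm2 (adjoint_c F *\<^sub>v w))"
    unfolding w_def using gram_quadratic_form[OF N_carrier z] gram_quadratic_form[OF F_carrier, of "M *\<^sub>v z"] z
    by simp
  finally have "cnorm2 (adjoint_c F *\<^sub>v w) = 0" using s by (simp add: complex_eq_iff)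
  then have "w = 0\<^sub>v k" using cnorm2_eq_0_iff[of "adjoint_c F *\<^sub>v w" p] F_adjoint_kernel[OF w] w by simp
  then show ?thesis using M_kernel[OF z] unfolding w_def by simp
qed

lemma loop_mat_0_kernel: "z \<in> carrier_vec k \<Longrightarrow> loop_mat 0 *\<^sub>v z = 0\<^sub>v k \<Longrightarrow> z = 0\<^sub>v k"
  by (rule loop_mat_kernel) simp_all

lemma input_mat_mult_vec_carrier[simp]: "y \<in> carrier_vec (p + q) \<Longrightarrow> input_mat *\<^sub>v y \<in> carrier_vec k"
  by (rule mult_mat_vec_carrier[OF input_mat_carrier])

lemma input_mat_mult_append:
  assumes a: "a \<in> carrier_vec p" and b: "b \<in> carrier_vec q"
  shows "input_mat *\<^sub>v (a @\<^sub>v b)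
    = complex_of_real \<sigma>w \<cdot>\<^sub>v (F *\<^sub>v a) + complex_of_real (- \<sigma>v) \<cdot>\<^sub>v (L *\<^sub>v (N *\<^sub>v b))"
proof -
  have "input_mat *\<^sub>v (a @\<^sub>v b)
      = (complex_of_real \<sigma>w \<cdot>\<^sub>m F) *\<^sub>v a + (complex_of_real (- \<sigma>v) \<cdot>\<^sub>m (L * N)) *\<^sub>v b"
    unfolding input_mat_def
    by (rule append_cols_mult_append_vec[of _ k p _ q]) (use a b F_carrier in simp_all)
  then show ?thesis
    using a b by (simp add: smult_mat_mult_vec[of _ k p] smult_mat_mult_vec[of _ k q]
        assoc_mult_mat_vec[of _ k k _ q])
qed

lemma minv_loop_mat_carrier: "Re s = 0 \<Longrightarrow> minv (loop_mat s) \<in> carrier_mat k k"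
  by (rule minv_inverse(1)[OF loop_mat_carrier loop_mat_kernel])

lemma transfer_carrier: "Re s = 0 \<Longrightarrow> transfer s \<in> carrier_mat q (p + q)"
  unfolding transfer_def
  by (rule mult_carrier_mat[OF mult_carrier_mat[OF adjoint_carrier(2) minv_loop_mat_carrier]
        input_mat_carrier])

lemma transfer_0_carrier: "transfer 0 \<in> carrier_mat q (p + q)"
  by (rule transfer_carrier) simp

lemma transfer_mult_vec:
  assumes s: "Re s = 0" and y: "y \<in> carrier_vec (p + q)"
  shows "transfer s *\<^sub>v y = adjoint_c N *\<^sub>v (minv (loop_mat s) *\<^sub>v (input_mat *\<^sub>v y))"
proof -
  note X = minv_loop_mat_carrier[OF s]
  have "transfer s *\<^sub>v y = (adjoint_c N * minv (loop_mat s)) *\<^sub>v (input_mat *\<^sub>v y)"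
    unfolding transfer_def by (rule assoc_mult_mat_vec[OF mult_carrier_mat[OF adjoint_carrier(2) X] input_mat_carrier y])
  also have "\<dots> = adjoint_c N *\<^sub>v (minv (loop_mat s) *\<^sub>v (input_mat *\<^sub>v y))"
    by (rule assoc_mult_mat_vec[OF adjoint_carrier(2) X]) (simp add: y)
  finally show ?thesis .
qed

text \<open>On the imaginary axis the gain never exceeds the static gain: if \<open>z\<^sub>s\<close> and \<open>z\<^sub>0\<close>
  solve \<open>(s I + L M) z = u\<close> and \<open>L M z = u\<close>, then \<open>M (z\<^sub>0 - z\<^sub>s) = s L\<^sup>-\<^sup>1 z\<^sub>s\<close>, so
  \<open>N\<^sup>H (z\<^sub>0 - z\<^sub>s)\<close> is orthogonal to \<open>N\<^sup>H z\<^sub>s\<close> in the real inner product.\<close>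
lemma cnorm2_transfer_le_transfer_0:
  assumes s: "Re s = 0" and y: "y \<in> carrier_vec (p + q)"
  shows "cnorm2 (transfer s *\<^sub>v y) \<le> cnorm2 (transfer 0 *\<^sub>v y)"
proof -
  define u where "u = input_mat *\<^sub>v y"
  have u: "u \<in> carrier_vec k" unfolding u_def using y by simp
  obtain z where z: "z \<in> carrier_vec k" "loop_mat s *\<^sub>v z = u" "minv (loop_mat s) *\<^sub>v u = z"
    using solve_via_minv[OF loop_mat_carrier loop_mat_kernel[OF s] u] by blast
  obtain z0 where z0: "z0 \<in> carrier_vec k" "loop_mat 0 *\<^sub>v z0 = u" "minv (loop_mat 0) *\<^sub>v u = z0"
    using solve_via_minv[OF loop_mat_carrier loop_mat_0_kernel u] by auto
  obtain t where t: "t \<in> carrier_vec k" "L *\<^sub>v t = z"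
    using solve_via_minv[OF L_carrier L_kernel z(1)] by blast
  define d where "d = z0 - z"
  have d: "d \<in> carrier_vec k" "z0 = z + d" unfolding d_def using z z0 by (auto simp: vec_eq_iff)
  have eq: "L *\<^sub>v (s \<cdot>\<^sub>v t + M *\<^sub>v z) = L *\<^sub>v (M *\<^sub>v z0)"
    using z z0 t loop_mat_mult_vec[OF z(1), of s] loop_mat_0_mult_vec[OF z0(1)]
    by (simp add: mult_add_distrib_mat_vec[of _ k k] mult_mat_vec[of _ k k])
  have Mz0: "s \<cdot>\<^sub>v t + M *\<^sub>v z = M *\<^sub>v z0"
    by (rule mult_mat_vec_cancel[OF L_carrier L_kernel _ _ eq]) (use t z z0 in simp_all)
  have "M *\<^sub>v d = M *\<^sub>v z0 - M *\<^sub>v z"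
    unfolding d_def by (rule mult_minus_distrib_mat_vec[OF M_carrier z0(1) z(1)])
  also have "\<dots> = s \<cdot>\<^sub>v t"
    unfolding Mz0[symmetric] using t z by (auto simp: vec_eq_iff)
  finally have Md: "M *\<^sub>v d = s \<cdot>\<^sub>v t" .
  have "(adjoint_c N *\<^sub>v z) \<bullet>c (adjoint_c N *\<^sub>v d) = cnj s * (z \<bullet>c t)"
    using cscalar_prod_adjoint_mult_vec[OF N_carrier z(1) d(1)] Md z t
    by (simp add: cscalar_prod_smult_right[of _ k])
  also have "z \<bullet>c t = complex_of_real (cnorm2 (adjoint_c F *\<^sub>v t))"
    unfolding t(2)[symmetric] by (rule gram_quadratic_form(2)[OF F_carrier t(1)])
  finally have "Re ((adjoint_c N *\<^sub>v z) \<bullet>c (adjoint_c N *\<^sub>v d)) = 0" using s by simp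
  then have "cnorm2 (adjoint_c N *\<^sub>v z0) = cnorm2 (adjoint_c N *\<^sub>v z) + cnorm2 (adjoint_c N *\<^sub>v d)"
    unfolding d(2) using z d by (simp add: mult_add_distrib_mat_vec[of _ q k] cnorm2_add[of _ q])
  moreover have "transfer s *\<^sub>v y = adjoint_c N *\<^sub>v z" "transfer 0 *\<^sub>v y = adjoint_c N *\<^sub>v z0"
    using transfer_mult_vec[OF s y] transfer_mult_vec[of 0, OF _ y] z(3) z0(3) by (simp_all add: u_def)
  ultimately show ?thesis using cnorm2_nonneg[of "adjoint_c N *\<^sub>v d"] by simp
qed

lemma max_sv_transfer_le_transfer_0:
  assumes s: "Re s = 0" and pq: "0 < p + q"
  shows "max_sv (transfer s) \<le> max_sv (transfer 0)"
proof (rule max_sv_le[OF transfer_carrier[OF s] pq max_sv_nonneg[OF transfer_carrier pq]])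
  fix y :: "complex vec" assume y: "y \<in> carrier_vec (p + q)"
  have "cnorm2 (transfer s *\<^sub>v y) \<le> cnorm2 (transfer 0 *\<^sub>v y)"
    by (rule cnorm2_transfer_le_transfer_0[OF s y])
  also have "\<dots> \<le> (max_sv (transfer 0))\<^sup>2 * cnorm2 y"
    by (rule cnorm2_mult_vec_le_max_sv[OF transfer_carrier pq y]) simp
  finally show "cnorm2 (transfer s *\<^sub>v y) \<le> (max_sv (transfer 0))\<^sup>2 * cnorm2 y" .
qed simp

lemma transfer_0_mult_append:
  assumes a: "a \<in> carrier_vec p" and b: "b \<in> carrier_vec q"
    and g: "g \<in> carrier_vec k" "L *\<^sub>v g = F *\<^sub>v a"
    and h: "h \<in> carrier_vec k" "M *\<^sub>v h = g"
    and h': "h' \<in> carrier_vec k" "M *\<^sub>v h' = N *\<^sub>v b"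
  shows "transfer 0 *\<^sub>v (a @\<^sub>v b)
    = complex_of_real \<sigma>w \<cdot>\<^sub>v (adjoint_c N *\<^sub>v h) + complex_of_real (- \<sigma>v) \<cdot>\<^sub>v (adjoint_c N *\<^sub>v h')"
proof -
  define z where "z = complex_of_real \<sigma>w \<cdot>\<^sub>v h + complex_of_real (- \<sigma>v) \<cdot>\<^sub>v h'"
  have z: "z \<in> carrier_vec k" unfolding z_def using h h' by simp
  have "M *\<^sub>v z = complex_of_real \<sigma>w \<cdot>\<^sub>v g + complex_of_real (- \<sigma>v) \<cdot>\<^sub>v (N *\<^sub>v b)"
    unfolding z_def using h h' by (simp add: mult_add_distrib_mat_vec[of _ k k] mult_mat_vec[of _ k k])
  then have "loop_mat 0 *\<^sub>v z = input_mat *\<^sub>v (a @\<^sub>v b)"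
    unfolding loop_mat_0_mult_vec[OF z] input_mat_mult_append[OF a b]
    using g b by (simp add: mult_add_distrib_mat_vec[of _ k k] mult_mat_vec[of _ k k])
  then have "minv (loop_mat 0) *\<^sub>v (input_mat *\<^sub>v (a @\<^sub>v b)) = z"
    by (intro minv_mult_vec_eq[OF loop_mat_carrier loop_mat_0_kernel z]) simp_all
  then show ?thesis
    using transfer_mult_vec[of 0 "a @\<^sub>v b"] a b h h' unfolding z_def
    by (simp add: mult_add_distrib_mat_vec[of _ q k] mult_mat_vec[of _ q k])
qed

lemma transfer_0_mult_adjoint_append:
  assumes g: "g \<in> carrier_vec k" and h: "h \<in> carrier_vec k" "M *\<^sub>v h = g"
  shows "transfer 0 *\<^sub>v ((\<alpha> \<cdot>\<^sub>v (adjoint_c F *\<^sub>v g)) @\<^sub>v (\<beta> \<cdot>\<^sub>v (adjoint_c N *\<^sub>v h)))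
    = (complex_of_real \<sigma>w * \<alpha> - complex_of_real \<sigma>v * \<beta>) \<cdot>\<^sub>v (adjoint_c N *\<^sub>v h)"
proof -
  have "transfer 0 *\<^sub>v ((\<alpha> \<cdot>\<^sub>v (adjoint_c F *\<^sub>v g)) @\<^sub>v (\<beta> \<cdot>\<^sub>v (adjoint_c N *\<^sub>v h)))
      = complex_of_real \<sigma>w \<cdot>\<^sub>v (adjoint_c N *\<^sub>v (\<alpha> \<cdot>\<^sub>v h))
        + complex_of_real (- \<sigma>v) \<cdot>\<^sub>v (adjoint_c N *\<^sub>v (\<beta> \<cdot>\<^sub>v h))"
  proof (rule transfer_0_mult_append)
    show "L *\<^sub>v (\<alpha> \<cdot>\<^sub>v g) = F *\<^sub>v (\<alpha> \<cdot>\<^sub>v (adjoint_c F *\<^sub>v g))"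
      using g by (simp add: mult_mat_vec[of _ k k] mult_mat_vec[of _ k p] gram_mult_vec[OF F_carrier])
    show "M *\<^sub>v (\<alpha> \<cdot>\<^sub>v h) = \<alpha> \<cdot>\<^sub>v g"
      using h by (simp add: mult_mat_vec[of _ k k])
    show "M *\<^sub>v (\<beta> \<cdot>\<^sub>v h) = N *\<^sub>v (\<beta> \<cdot>\<^sub>v (adjoint_c N *\<^sub>v h))"
      using h by (simp add: mult_mat_vec[of _ k k] mult_mat_vec[of _ k q] gram_mult_vec[OF N_carrier])
  qed (use g h in simp_all)
  also have "\<dots> = (complex_of_real \<sigma>w * \<alpha> - complex_of_real \<sigma>v * \<beta>) \<cdot>\<^sub>v (adjoint_c N *\<^sub>v h)"
    using h by (auto simp: mult_mat_vec[of _ q k] vec_eq_iff algebra_simps)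
  finally show ?thesis .
qed

text \<open>The test vector \<open>(\<sigma>\<^sub>w P F\<^sup>H g, -\<sigma>\<^sub>v Q N\<^sup>H h)\<close> with \<open>P = \<parallel>N\<^sup>H h\<parallel>\<^sup>2\<close>,
  \<open>Q = \<parallel>F\<^sup>H g\<parallel>\<^sup>2\<close> has squared norm \<open>P Q c\<close> and is mapped to \<open>c N\<^sup>H h\<close>, where
  \<open>c = \<sigma>\<^sub>w\<^sup>2 P + \<sigma>\<^sub>v\<^sup>2 Q\<close>.\<close>
lemma transfer_0_lower_bound:
  assumes g: "g \<in> carrier_vec k" "g \<noteq> 0\<^sub>v k" and h: "h \<in> carrier_vec k" "M *\<^sub>v h = g"
  shows "\<sigma>w\<^sup>2 * cnorm2 (adjoint_c N *\<^sub>v h) + \<sigma>v\<^sup>2 * cnorm2 (adjoint_c F *\<^sub>v g)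
    \<le> (max_sv (transfer 0))\<^sup>2 * cnorm2 (adjoint_c F *\<^sub>v g)"
proof -
  define P where "P = cnorm2 (adjoint_c N *\<^sub>v h)"
  define Q where "Q = cnorm2 (adjoint_c F *\<^sub>v g)"
  define c where "c = \<sigma>w\<^sup>2 * P + \<sigma>v\<^sup>2 * Q"
  define a where "a = complex_of_real (\<sigma>w * P) \<cdot>\<^sub>v (adjoint_c F *\<^sub>v g)"
  define b where "b = complex_of_real (- \<sigma>v * Q) \<cdot>\<^sub>v (adjoint_c N *\<^sub>v h)"
  have a: "a \<in> carrier_vec p" and b: "b \<in> carrier_vec q" using g h by (simp_all add: a_def b_def)
  have "h \<noteq> 0\<^sub>v k" using h g by auto
  then have "P > 0" unfolding P_def using cnorm2_pos_iff[of "adjoint_c N *\<^sub>v h" q] N_adjoint_kernel h by auto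
  have "Q > 0" unfolding Q_def using cnorm2_pos_iff[of "adjoint_c F *\<^sub>v g" p] F_adjoint_kernel g by auto
  have "transfer 0 *\<^sub>v (a @\<^sub>v b) = complex_of_real c \<cdot>\<^sub>v (adjoint_c N *\<^sub>v h)"
    unfolding a_def b_def transfer_0_mult_adjoint_append[OF g(1) h] c_def
    by (simp add: power2_eq_square mult.assoc)
  then have "cnorm2 (transfer 0 *\<^sub>v (a @\<^sub>v b)) = c\<^sup>2 * P"
    unfolding P_def using h by (simp add: cnorm2_smult[of _ q])
  moreover have "cnorm2 (a @\<^sub>v b) = P * Q * c"
  proof -
    have "cnorm2 a = (\<sigma>w * P)\<^sup>2 * Q" unfolding a_def Q_def by (rule cnorm2_smult[of _ p]) (use g in simp)
    moreover have "cnorm2 b = (- \<sigma>v * Q)\<^sup>2 * P" unfolding b_def P_def by (rule cnorm2_smult[of _ q]) (use h in simp)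
    ultimately show ?thesis unfolding cnorm2_append[OF a b] c_def by (simp add: power2_eq_square algebra_simps)
  qed
  moreover have "0 < p + q" using g input_dim_pos by (auto simp: vec_eq_iff)
  then have "cnorm2 (transfer 0 *\<^sub>v (a @\<^sub>v b)) \<le> (max_sv (transfer 0))\<^sup>2 * cnorm2 (a @\<^sub>v b)"
    using a b by (intro cnorm2_mult_vec_le_max_sv[OF transfer_0_carrier]) simp_all
  ultimately have "c * (c * P) \<le> c * ((max_sv (transfer 0))\<^sup>2 * Q * P)"
    by (simp add: power2_eq_square algebra_simps)
  moreover have "c \<ge> 0" unfolding c_def using \<open>P > 0\<close> \<open>Q > 0\<close> by simp
  ultimately have "c \<le> (max_sv (transfer 0))\<^sup>2 * Q"
    using \<open>P > 0\<close> \<open>Q > 0\<close> by (cases "c = 0") (auto simp: mult_le_cancel_left mult_le_cancel_right)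
  then show ?thesis unfolding c_def P_def Q_def by (simp add: algebra_simps)
qed

lemma sigma_v_le_max_sv_transfer_0:
  assumes "0 < k" shows "\<sigma>v\<^sup>2 \<le> (max_sv (transfer 0))\<^sup>2"
proof -
  define g :: "complex vec" where "g = unit_vec k 0"
  have g: "g \<in> carrier_vec k" "g \<noteq> 0\<^sub>v k"
    unfolding g_def using assms by (auto simp: vec_eq_iff)
  obtain h where h: "h \<in> carrier_vec k" "M *\<^sub>v h = g"
    using solve_via_minv[OF M_carrier M_kernel g(1)] by blast
  have "cnorm2 (adjoint_c F *\<^sub>v g) > 0"
    using cnorm2_pos_iff[of "adjoint_c F *\<^sub>v g" p] F_adjoint_kernel g by auto
  moreover have "\<sigma>v\<^sup>2 * cnorm2 (adjoint_c F *\<^sub>v g) \<le> (max_sv (transfer 0))\<^sup>2 * cnorm2 (adjoint_c F *\<^sub>v g)"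
    using transfer_0_lower_bound[OF g h] cnorm2_nonneg[of "adjoint_c N *\<^sub>v h"]
    by (smt (verit) zero_le_power2 mult_nonneg_nonneg)
  ultimately show ?thesis by simp
qed

end

locale factored_system_pair =
  A: factored_system k p q F1 N1 \<sigma>w \<sigma>v + B: factored_system k p q F2 N2 \<sigma>w \<sigma>v
  for k p q F1 N1 F2 N2 \<sigma>w \<sigma>v +
  assumes F_adjoint_le: "\<And>x. x \<in> carrier_vec k \<Longrightarrow> cnorm2 (adjoint_c F2 *\<^sub>v x) \<le> cnorm2 (adjoint_c F1 *\<^sub>v x)"
    and N_adjoint_le: "\<And>x. x \<in> carrier_vec k \<Longrightarrow> cnorm2 (adjoint_c N2 *\<^sub>v x) \<le> cnorm2 (adjoint_c N1 *\<^sub>v x)"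
begin

lemma transfer_0_first_block_bound:
  assumes k: "0 < k" and a: "a \<in> carrier_vec p" and g: "g \<in> carrier_vec k" "A.L *\<^sub>v g = F1 *\<^sub>v a"
    and h: "h \<in> carrier_vec k" "A.M *\<^sub>v h = g"
  shows "\<sigma>w\<^sup>2 * cnorm2 (adjoint_c N1 *\<^sub>v h)
    \<le> ((max_sv (B.transfer 0))\<^sup>2 - \<sigma>v\<^sup>2) * cnorm2 a"
proof (cases "g = 0\<^sub>v k")
  case True
  then have "h = 0\<^sub>v k" using A.M_kernel h by simp
  then show ?thesis
    using B.sigma_v_le_max_sv_transfer_0[OF k] cnorm2_nonneg[of a] mult_mat_vec_zero[OF A.adjoint_carrier(2)]
    by simp
next
  case False
  obtain h2 where h2: "h2 \<in> carrier_vec k" "B.M *\<^sub>v h2 = g"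
    using solve_via_minv[OF B.M_carrier B.M_kernel g(1)] by blast
  have "\<sigma>w\<^sup>2 * cnorm2 (adjoint_c N1 *\<^sub>v h) \<le> \<sigma>w\<^sup>2 * cnorm2 (adjoint_c N2 *\<^sub>v h2)"
    using gram_solution_antimono[OF A.N_carrier B.N_carrier N_adjoint_le h(1) h2(1) h(2) h2(2)]
    by (simp add: mult_left_mono)
  also have "\<dots> \<le> ((max_sv (B.transfer 0))\<^sup>2 - \<sigma>v\<^sup>2) * cnorm2 (adjoint_c F2 *\<^sub>v g)"
    using B.transfer_0_lower_bound[OF g(1) False h2] by (simp add: algebra_simps)
  also have "\<dots> \<le> ((max_sv (B.transfer 0))\<^sup>2 - \<sigma>v\<^sup>2) * cnorm2 a"
    using F_adjoint_le[OF g(1)] cnorm2_adjoint_mult_vec_le[OF A.F_carrier a g]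
      B.sigma_v_le_max_sv_transfer_0[OF k]
    by (intro mult_left_mono) auto
  finally show ?thesis .
qed

text \<open>The \<open>\<sigma>\<^sub>w\<close>-block of the static gain of the first system is bounded through the
  test vectors of the second one, the \<open>\<sigma>\<^sub>v\<close>-block because \<open>N\<^sup>H (N N\<^sup>H)\<^sup>-\<^sup>1 N\<close> is an
  orthogonal projection.\<close>
lemma max_sv_transfer_0_antimono:
  assumes k: "0 < k"
  shows "max_sv (A.transfer 0) \<le> max_sv (B.transfer 0)"
proof -
  define S where "S = max_sv (B.transfer 0)"
  have pq: "0 < p + q" using A.input_dim_pos[OF k] by simp
  have "S \<ge> 0" unfolding S_def by (rule max_sv_nonneg[OF B.transfer_0_carrier pq])
  have Sv: "\<sigma>v\<^sup>2 \<le> S\<^sup>2" unfolding S_def by (rule B.sigma_v_le_max_sv_transfer_0[OF k])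
  show ?thesis unfolding S_def[symmetric]
  proof (rule max_sv_le[OF A.transfer_0_carrier pq \<open>S \<ge> 0\<close>])
    fix y :: "complex vec" assume y: "y \<in> carrier_vec (p + q)"
    define a where "a = vec_first y p"
    define b where "b = vec_last y q"
    have ab: "a \<in> carrier_vec p" "b \<in> carrier_vec q" "y = a @\<^sub>v b"
      using y by (simp_all add: a_def b_def)
    obtain g where g: "g \<in> carrier_vec k" "A.L *\<^sub>v g = F1 *\<^sub>v a"
      using solve_via_minv[OF A.L_carrier A.L_kernel, of "F1 *\<^sub>v a"] ab by auto
    obtain h where h: "h \<in> carrier_vec k" "A.M *\<^sub>v h = g"
      using solve_via_minv[OF A.M_carrier A.M_kernel g(1)] by blast
    obtain h' where h': "h' \<in> carrier_vec k" "A.M *\<^sub>v h' = N1 *\<^sub>v b"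
      using solve_via_minv[OF A.M_carrier A.M_kernel, of "N1 *\<^sub>v b"] ab by auto
    have "cnorm2 (A.transfer 0 *\<^sub>v y) = cnorm2 (complex_of_real \<sigma>w \<cdot>\<^sub>v (adjoint_c N1 *\<^sub>v h)
        + complex_of_real (- \<sigma>v) \<cdot>\<^sub>v (adjoint_c N1 *\<^sub>v h'))"
      unfolding ab(3) A.transfer_0_mult_append[OF ab(1,2) g h h'] ..
    also have "\<dots> \<le> ((S\<^sup>2 - \<sigma>v\<^sup>2) + \<sigma>v\<^sup>2) * (cnorm2 a + cnorm2 b)"
    proof (rule cnorm2_add_le[of _ q])
      show "cnorm2 (complex_of_real \<sigma>w \<cdot>\<^sub>v (adjoint_c N1 *\<^sub>v h)) \<le> (S\<^sup>2 - \<sigma>v\<^sup>2) * cnorm2 a"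
        using transfer_0_first_block_bound[OF k ab(1) g h] h by (simp add: cnorm2_smult[of _ q] S_def)
      show "cnorm2 (complex_of_real (- \<sigma>v) \<cdot>\<^sub>v (adjoint_c N1 *\<^sub>v h')) \<le> \<sigma>v\<^sup>2 * cnorm2 b"
        using cnorm2_adjoint_mult_vec_le[OF A.N_carrier ab(2) h'] h'
          cnorm2_smult[of "adjoint_c N1 *\<^sub>v h'" q "- \<sigma>v"]
        by (simp add: mult_left_mono del: of_real_minus)
    qed (use Sv h h' in \<open>simp_all add: cnorm2_nonneg\<close>)
    also have "\<dots> = S\<^sup>2 * cnorm2 y" unfolding ab(3) cnorm2_append[OF ab(1,2)] by simp
    finally show "cnorm2 (A.transfer 0 *\<^sub>v y) \<le> S\<^sup>2 * cnorm2 y" .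
  qed
qed

end

lemma hinf_norm_eq_max_sv_0:
  assumes "\<And>\<omega>. max_sv (\<Phi> (\<i> * complex_of_real \<omega>)) \<le> max_sv (\<Phi> 0)"
  shows "hinf_norm \<Phi> = max_sv (\<Phi> 0)"
  unfolding hinf_norm_def
proof (rule cSup_eq_maximum)
  show "max_sv (\<Phi> 0) \<in> range (\<lambda>\<omega>. max_sv (\<Phi> (\<i> * complex_of_real \<omega>)))"
    by (rule image_eqI[of _ _ 0]) simp_all
qed (use assms in auto)

abbreviation of_real_mat :: "real mat \<Rightarrow> complex mat" where
  "of_real_mat \<equiv> map_mat complex_of_real"

lemma of_real_mat_mult: "A \<in> carrier_mat r n \<Longrightarrow> B \<in> carrier_mat n c \<Longrightarrow> of_real_mat (A * B) = of_real_mat A * of_real_mat B"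
  by (rule of_real_hom.mat_hom_mult)

lemma of_real_mat_smult: "of_real_mat (a \<cdot>\<^sub>m A) = complex_of_real a \<cdot>\<^sub>m of_real_mat A"
  by (intro eq_matI) auto

lemma pos_diag_carrier: "pos_diag r E \<Longrightarrow> E \<in> carrier_mat r r"
  unfolding pos_diag_def by auto

lemma pos_diag_smult_one: "c > 0 \<Longrightarrow> pos_diag r (c \<cdot>\<^sub>m 1\<^sub>m r)"
  unfolding pos_diag_def diagonal_mat_def by auto

lemma loewner_le_diag:
  assumes "loewner_le r A B" and i: "i < r"
  shows "A $$ (i, i) \<le> B $$ (i, i)"
proof -
  have A: "A \<in> carrier_mat r r" and B: "B \<in> carrier_mat r r"
    and psd: "\<And>x. x \<in> carrier_vec r \<Longrightarrow> x \<bullet> ((B - A) *\<^sub>v x) \<ge> 0"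
    using assms unfolding loewner_le_def by auto
  have "(B - A) *\<^sub>v unit_vec r i \<in> carrier_vec r" by (rule mult_mat_vec_carrier[of _ r r]) (use A B in auto)
  then have "unit_vec r i \<bullet> ((B - A) *\<^sub>v unit_vec r i) = B $$ (i, i) - A $$ (i, i)"
    using A B i by (simp add: scalar_prod_left_unit)
  then show ?thesis using psd[of "unit_vec r i"] by simp
qed

lemma dim_diag_powr[simp]: "dim_row (diag_powr E a) = dim_row E" "dim_col (diag_powr E a) = dim_col E"
  unfolding diag_powr_def by simp_all

lemma diag_powr_carrier[simp]: "E \<in> carrier_mat r r \<Longrightarrow> diag_powr E a \<in> carrier_mat r r"
  unfolding diag_powr_def by auto

lemma diag_powr_index:
  "i < dim_row E \<Longrightarrow> j < dim_col E \<Longrightarrow> diag_powr E a $$ (i, j) = (if i = j then E $$ (i, i) powr a else 0)"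
  unfolding diag_powr_def by auto

lemma transpose_diag_powr: "E \<in> carrier_mat r r \<Longrightarrow> transpose_mat (diag_powr E a) = diag_powr E a"
  by (intro eq_matI) (auto simp: diag_powr_index diag_powr_def)

lemma diag_powr_mult:
  assumes E: "pos_diag r E"
  shows "diag_powr E a * diag_powr E b = diag_powr E (a + b)"
proof -
  have Ec: "E \<in> carrier_mat r r" and pos: "\<And>i. i < r \<Longrightarrow> E $$ (i, i) > 0"
    using E unfolding pos_diag_def by auto
  show ?thesis
  proof (rule eq_matI)
    fix i j assume "i < dim_row (diag_powr E (a + b))" "j < dim_col (diag_powr E (a + b))"
    then have i: "i < r" and j: "j < r" using Ec by (auto simp: diag_powr_def)
    have "(diag_powr E a * diag_powr E b) $$ (i, j)
        = (\<Sum>l<r. diag_powr E a $$ (i, l) * diag_powr E b $$ (l, j))"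
      using i j Ec by (simp add: scalar_prod_lessThan diag_powr_def)
    also have "\<dots> = (\<Sum>l<r. if l = i then (if i = j then E $$ (i, i) powr a * E $$ (i, i) powr b else 0) else 0)"
      using i j Ec by (intro sum.cong) (auto simp: diag_powr_index)
    also have "\<dots> = diag_powr E (a + b) $$ (i, j)"
      using i j Ec pos[OF i] by (simp add: diag_powr_index powr_add)
    finally show "(diag_powr E a * diag_powr E b) $$ (i, j) = diag_powr E (a + b) $$ (i, j)" .
  qed (use Ec in \<open>auto simp: diag_powr_def\<close>)
qed

lemma diag_powr_1: "pos_diag r E \<Longrightarrow> diag_powr E 1 = E"
  unfolding pos_diag_def diagonal_mat_def
  by (intro eq_matI) (auto simp: diag_powr_index less_imp_le)

lemma of_real_mat_diag_powr_mult_vec_index: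
  assumes D: "D \<in> carrier_mat r r" and C: "C \<in> carrier_mat r c" and x: "x \<in> carrier_vec c" and i: "i < r"
  shows "(of_real_mat (diag_powr D a * C) *\<^sub>v x) $ i = complex_of_real (D $$ (i, i) powr a) * (of_real_mat C *\<^sub>v x) $ i"
proof -
  have "of_real_mat (diag_powr D a * C) *\<^sub>v x = of_real_mat (diag_powr D a) *\<^sub>v (of_real_mat C *\<^sub>v x)"
    using D C x by (simp add: of_real_mat_mult[of _ r r _ c] assoc_mult_mat_vec[of _ r r _ c])
  also have "\<dots> $ i = (\<Sum>j<r. of_real_mat (diag_powr D a) $$ (i, j) * (of_real_mat C *\<^sub>v x) $ j)"
    by (rule mult_mat_vec_index_sum) (use D C x i in auto)
  also have "\<dots> = (\<Sum>j<r. if j = i then complex_of_real (D $$ (i, i) powr a) * (of_real_mat C *\<^sub>v x) $ i else 0)"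
    using D i by (intro sum.cong) (auto simp: diag_powr_index)
  finally show ?thesis using i by simp
qed

lemma cnorm2_of_real_mat_diag_powr_mult_vec:
  assumes D: "D \<in> carrier_mat r r" and C: "C \<in> carrier_mat r c" and x: "x \<in> carrier_vec c"
  shows "cnorm2 (of_real_mat (diag_powr D a * C) *\<^sub>v x) = (\<Sum>i<r. (D $$ (i, i) powr a)\<^sup>2 * (cmod ((of_real_mat C *\<^sub>v x) $ i))\<^sup>2)"
proof -
  have "of_real_mat (diag_powr D a * C) \<in> carrier_mat r c"
    using mult_carrier_mat[OF diag_powr_carrier[OF D] C] by simp
  then have Dx: "of_real_mat (diag_powr D a * C) *\<^sub>v x \<in> carrier_vec r" using x by simp
  then show ?thesis unfolding cnorm2_lessThan[OF Dx]
    by (intro sum.cong refl) (simp add: of_real_mat_diag_powr_mult_vec_index[OF D C x] norm_mult power_mult_distrib)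
qed

lemma cnorm2_of_real_mat_diag_powr_mult_vec_mono:
  assumes D1: "D1 \<in> carrier_mat r r" and D2: "D2 \<in> carrier_mat r r" and C: "C \<in> carrier_mat r c"
    and x: "x \<in> carrier_vec c"
    and le: "\<And>i. i < r \<Longrightarrow> 0 \<le> D1 $$ (i, i) powr a \<and> D1 $$ (i, i) powr a \<le> D2 $$ (i, i) powr a"
  shows "cnorm2 (of_real_mat (diag_powr D1 a * C) *\<^sub>v x) \<le> cnorm2 (of_real_mat (diag_powr D2 a * C) *\<^sub>v x)"
  unfolding cnorm2_of_real_mat_diag_powr_mult_vec[OF D1 C x] cnorm2_of_real_mat_diag_powr_mult_vec[OF D2 C x]
  using le by (intro sum_mono mult_right_mono power_mono) auto

section \<open>The incidence matrix of a spanning tree\<close>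

lemma D_tau_carrier[simp]: "D_tau n es \<in> carrier_mat n (n - 1)"
  and D_tau_carrier'[simp]: "D_tau n es \<in> carrier_mat n (n - Suc 0)"
  unfolding D_tau_def by simp_all

lemma dim_D_tau[simp]: "dim_row (D_tau n es) = n" "dim_col (D_tau n es) = n - 1"
  unfolding D_tau_def by simp_all

lemma D_tau_index:
  assumes "i < n" "l < n - 1" "n - 1 \<le> length es"
  shows "D_tau n es $$ (i, l) = (if fst (es ! l) = i then 1 else if snd (es ! l) = i then -1 else 0)"
  using assms unfolding D_tau_def incidence_def by auto

lemma D_tau_column_potential:
  assumes l: "l < n - 1" and len: "n - 1 \<le> length es"
    and e: "fst (es ! l) < n" "snd (es ! l) < n" "fst (es ! l) \<noteq> snd (es ! l)"
  shows "(\<Sum>i<n. complex_of_real (D_tau n es $$ (i, l)) * f i) = f (fst (es ! l)) - f (snd (es ! l))"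
proof -
  have "(\<Sum>i<n. complex_of_real (D_tau n es $$ (i, l)) * f i)
      = (\<Sum>i<n. (if i = fst (es ! l) then f i else 0) - (if i = snd (es ! l) then f i else 0))"
    using l len e by (intro sum.cong) (auto simp: D_tau_index)
  also have "\<dots> = f (fst (es ! l)) - f (snd (es ! l))" using e by (simp add: sum_subtractf)
  finally show ?thesis .
qed

lemma potential_const_on_rtrancl:
  assumes "\<And>u w. (u, w) \<in> set es \<Longrightarrow> f u = f w" and "(i, j) \<in> (undirected_rel es)\<^sup>*"
  shows "f j = f i"
  using assms(2)
proof induction
  case (step v u)
  then have "(v, u) \<in> set es \<or> (u, v) \<in> set es" by (auto simp: undirected_rel_def)
  then show ?case using step.IH assms(1) by metis
qed simp

lemma tree_potential_const:
  assumes vg: "valid_graph n es" and st: "first_edges_spanning_tree n es"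
    and zero: "\<And>l. l < n - 1 \<Longrightarrow> (\<Sum>i<n. complex_of_real (D_tau n es $$ (i, l)) * f i) = 0"
    and j: "j < n" and "0 < n"
  shows "f j = f 0"
proof (rule potential_const_on_rtrancl)
  have len: "n - 1 \<le> length es" and conn: "graph_connected n (take (n - 1) es)"
    using st unfolding first_edges_spanning_tree_def by auto
  show "(0, j) \<in> (undirected_rel (take (n - 1) es))\<^sup>*"
    using conn j \<open>0 < n\<close> unfolding graph_connected_def by simp
  fix u w assume "(u, w) \<in> set (take (n - 1) es)"
  then obtain l where l: "l < n - 1" "l < length es" "es ! l = (u, w)"
    unfolding in_set_conv_nth by auto
  then have "(u, w) \<in> set es" using nth_mem[of l es] by simp
  then have "u < n" "w < n" "u \<noteq> w" using vg unfolding valid_graph_def by auto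
  then show "f u = f w"
    using D_tau_column_potential[of l n es f] zero[OF l(1)] l len by simp
qed

text \<open>By connectivity a potential on the nodes with zero difference along every tree edge is
  constant, so \<open>D\<^sub>\<tau>\<^sup>T\<close> without the row of node \<open>0\<close> is injective; hence that square submatrix of
  \<open>D\<^sub>\<tau>\<close> is invertible and \<open>D\<^sub>\<tau>\<close> has full column rank.\<close>
lemma D_tau_kernel:
  assumes vg: "valid_graph n es" and st: "first_edges_spanning_tree n es" and n: "n \<ge> 2"
    and x: "x \<in> carrier_vec (n - 1)" and Dx: "of_real_mat (D_tau n es) *\<^sub>v x = 0\<^sub>v n"
  shows "x = 0\<^sub>v (n - 1)"
proof -
  define k where "k = n - 1"
  have nk: "n = Suc k" unfolding k_def using n by simp
  have xk: "x \<in> carrier_vec k" using x unfolding k_def .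
  have D: "of_real_mat (D_tau n es) \<in> carrier_mat n k" unfolding k_def by simp
  define Dr where "Dr = mat k k (\<lambda>(i, l). complex_of_real (D_tau n es $$ (i + 1, l)))"
  have Dr: "Dr \<in> carrier_mat k k" unfolding Dr_def by simp
  have "z = 0\<^sub>v k" if z: "z \<in> carrier_vec k" and Tz: "transpose_mat Dr *\<^sub>v z = 0\<^sub>v k" for z
  proof -
    define f where "f i = (if i = 0 then 0 else z $ (i - 1))" for i
    have "(\<Sum>i<n. complex_of_real (D_tau n es $$ (i, l)) * f i) = 0" if l: "l < n - 1" for l
    proof -
      have "(\<Sum>i<n. complex_of_real (D_tau n es $$ (i, l)) * f i)
          = (\<Sum>i<k. complex_of_real (D_tau n es $$ (i + 1, l)) * f (i + 1))"
        unfolding nk sum.lessThan_Suc_shift by (simp add: f_def)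
      also have "\<dots> = (\<Sum>i<k. transpose_mat Dr $$ (l, i) * z $ i)"
        using l by (intro sum.cong) (auto simp: Dr_def f_def k_def)
      also have "\<dots> = (transpose_mat Dr *\<^sub>v z) $ l"
        by (rule mult_mat_vec_index_sum[symmetric]) (use Dr z l k_def in auto)
      finally show ?thesis using Tz l unfolding k_def by simp
    qed
    then have "f (i + 1) = f 0" if "i < k" for i
      using tree_potential_const[OF vg st] that nk by simp
    then show ?thesis using z by (auto simp: vec_eq_iff f_def)
  qed
  moreover have "Dr *\<^sub>v x = 0\<^sub>v k"
  proof (rule eq_vecI)
    fix i assume "i < dim_vec (0\<^sub>v k :: complex vec)"
    then have i: "i < k" by simp
    have "(Dr *\<^sub>v x) $ i = (\<Sum>l<k. Dr $$ (i, l) * x $ l)" by (rule mult_mat_vec_index_sum[OF Dr xk i])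
    also have "\<dots> = (\<Sum>l<k. of_real_mat (D_tau n es) $$ (i + 1, l) * x $ l)"
      using i by (intro sum.cong) (auto simp: Dr_def k_def)
    also have "\<dots> = (of_real_mat (D_tau n es) *\<^sub>v x) $ (i + 1)"
      using mult_mat_vec_index_sum[OF D xk, of "i + 1"] i nk by simp
    also have "\<dots> = 0" using Dx i nk by simp
    finally show "(Dr *\<^sub>v x) $ i = 0\<^sub>v k $ i" using i by simp
  qed (use Dr in simp)
  ultimately show ?thesis using mult_mat_vec_kernel_of_transpose[OF Dr _ xk] unfolding k_def by blast
qed

section \<open>The system \<open>\<Pi>\<^sub>\<tau>(E, W)\<close>\<close>

lemma R_mat_carrier[simp]: "R_mat n es \<in> carrier_mat (n - 1) (length es)"
  and R_mat_carrier'[simp]: "R_mat n es \<in> carrier_mat (n - Suc 0) (length es)"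
  unfolding R_mat_def by simp_all

definition F_mat :: "nat \<Rightarrow> (nat \<times> nat) list \<Rightarrow> real mat \<Rightarrow> complex mat" where
  "F_mat n es E = of_real_mat (transpose_mat (D_tau n es) * diag_powr E (-1/2))"

definition N_mat :: "nat \<Rightarrow> (nat \<times> nat) list \<Rightarrow> real mat \<Rightarrow> complex mat" where
  "N_mat n es W = of_real_mat (R_mat n es * diag_powr W (1/2))"

lemma adjoint_F_mat:
  assumes "pos_diag n E"
  shows "adjoint_c (F_mat n es E) = of_real_mat (diag_powr E (-1/2) * D_tau n es)"
  using assms unfolding F_mat_def adjoint_c_of_real
  by (simp add: transpose_mult[of _ "n - 1" n _ n] transpose_diag_powr[OF pos_diag_carrier[OF assms]]
      pos_diag_carrier)

lemma adjoint_N_mat: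
  assumes "pos_diag (length es) W"
  shows "adjoint_c (N_mat n es W) = of_real_mat (diag_powr W (1/2) * transpose_mat (R_mat n es))"
  using assms unfolding N_mat_def adjoint_c_of_real
  by (simp add: transpose_mult[of _ "n - 1" "length es" _ "length es"]
      transpose_diag_powr[OF pos_diag_carrier[OF assms]] pos_diag_carrier)

lemma F_mat_carrier: "pos_diag n E \<Longrightarrow> F_mat n es E \<in> carrier_mat (n - 1) n"
  unfolding F_mat_def using mult_carrier_mat[of "transpose_mat (D_tau n es)" "n - 1" n]
  by (simp add: pos_diag_carrier)

lemma N_mat_carrier: "pos_diag (length es) W \<Longrightarrow> N_mat n es W \<in> carrier_mat (n - 1) (length es)"
  unfolding N_mat_def using mult_carrier_mat[of "R_mat n es" "n - 1" "length es"]
  by (simp add: pos_diag_carrier)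

lemma adjoint_F_mat_kernel:
  assumes vg: "valid_graph n es" and st: "first_edges_spanning_tree n es" and n: "n \<ge> 2"
    and E: "pos_diag n E"
    and x: "x \<in> carrier_vec (n - 1)" and F0: "adjoint_c (F_mat n es E) *\<^sub>v x = 0\<^sub>v n"
  shows "x = 0\<^sub>v (n - 1)"
proof (rule D_tau_kernel[OF vg st n x], rule eq_vecI)
  fix i assume "i < dim_vec (0\<^sub>v n :: complex vec)"
  then have i: "i < n" by simp
  have "0 = (adjoint_c (F_mat n es E) *\<^sub>v x) $ i" using F0 i by simp
  also have "\<dots> = complex_of_real (E $$ (i, i) powr (-1/2)) * (of_real_mat (D_tau n es) *\<^sub>v x) $ i"
    unfolding adjoint_F_mat[OF E]
    by (rule of_real_mat_diag_powr_mult_vec_index[OF pos_diag_carrier[OF E] D_tau_carrier x i])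
  finally show "(of_real_mat (D_tau n es) *\<^sub>v x) $ i = 0\<^sub>v n $ i"
    using E i unfolding pos_diag_def by force
qed (use x in simp)

text \<open>Only the identity block of \<open>R = [I T\<^sub>\<tau>\<^sup>c]\<close> matters here.\<close>
lemma adjoint_N_mat_kernel:
  assumes st: "first_edges_spanning_tree n es" and W: "pos_diag (length es) W"
    and x: "x \<in> carrier_vec (n - 1)" and N0: "adjoint_c (N_mat n es W) *\<^sub>v x = 0\<^sub>v (length es)"
  shows "x = 0\<^sub>v (n - 1)"
proof (rule eq_vecI)
  fix l assume "l < dim_vec (0\<^sub>v (n - 1) :: complex vec)"
  moreover have "n - 1 \<le> length es" using st unfolding first_edges_spanning_tree_def by auto
  ultimately have l: "l < n - 1" and lm: "l < length es" by auto
  have RT: "transpose_mat (R_mat n es) \<in> carrier_mat (length es) (n - 1)" by simp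
  have "0 = (adjoint_c (N_mat n es W) *\<^sub>v x) $ l" using N0 lm by simp
  also have "\<dots> = complex_of_real (W $$ (l, l) powr (1/2)) * (of_real_mat (transpose_mat (R_mat n es)) *\<^sub>v x) $ l"
    unfolding adjoint_N_mat[OF W] by (rule of_real_mat_diag_powr_mult_vec_index[OF pos_diag_carrier[OF W] RT x lm])
  also have "(of_real_mat (transpose_mat (R_mat n es)) *\<^sub>v x) $ l
      = (\<Sum>i<n - 1. of_real_mat (transpose_mat (R_mat n es)) $$ (l, i) * x $ i)"
    by (rule mult_mat_vec_index_sum[OF _ x lm]) simp
  also have "\<dots> = (\<Sum>i<n - 1. if i = l then x $ l else 0)"
    using l lm by (intro sum.cong) (auto simp: R_mat_def)
  finally show "x $ l = 0\<^sub>v (n - 1) $ l" using W l lm unfolding pos_diag_def by force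
qed (use x in simp)

lemma factored_system_F_N:
  assumes "valid_graph n es" "first_edges_spanning_tree n es" "n \<ge> 2"
    and "pos_diag n E" "pos_diag (length es) W"
  shows "factored_system (n - 1) n (length es) (F_mat n es E) (N_mat n es W)"
  using assms F_mat_carrier N_mat_carrier adjoint_F_mat_kernel adjoint_N_mat_kernel
  by unfold_locales blast+

lemma gram_F_mat:
  assumes E: "pos_diag n E"
  shows "F_mat n es E * adjoint_c (F_mat n es E) = of_real_mat (L_es n es E)"
proof -
  define Dt where "Dt = D_tau n es"
  define Eh where "Eh = diag_powr E (-1/2)"
  have Ec: "E \<in> carrier_mat n n" by (rule pos_diag_carrier[OF E])
  have Dt: "Dt \<in> carrier_mat n (n - 1)" and Eh: "Eh \<in> carrier_mat n n"
    unfolding Dt_def Eh_def using Ec by simp_all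
  have "F_mat n es E * adjoint_c (F_mat n es E) = of_real_mat (transpose_mat Dt * Eh * (Eh * Dt))"
    unfolding adjoint_F_mat[OF E] unfolding F_mat_def Dt_def[symmetric] Eh_def[symmetric]
    by (rule of_real_mat_mult[symmetric]) (use Dt Eh in auto)
  also have "transpose_mat Dt * Eh * (Eh * Dt) = transpose_mat Dt * (Eh * Eh) * Dt"
    using Dt Eh by (simp add: assoc_mult_mat[of _ "n - 1" n _ n _ "n - 1"] assoc_mult_mat[of _ n n _ n _ "n - 1"]
        assoc_mult_mat[of _ "n - 1" n _ n _ n])
  also have "Eh * Eh = diag_powr E (-1)" unfolding Eh_def diag_powr_mult[OF E] by simp
  finally show ?thesis unfolding L_es_def Dt_def .
qed

lemma gram_N_mat:
  assumes W: "pos_diag (length es) W"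
  shows "N_mat n es W * adjoint_c (N_mat n es W) = of_real_mat (R_mat n es * W * transpose_mat (R_mat n es))"
proof -
  define m where "m = length es"
  define R where "R = R_mat n es"
  define Wh where "Wh = diag_powr W (1/2)"
  have Wc: "W \<in> carrier_mat m m" unfolding m_def by (rule pos_diag_carrier[OF W])
  have R: "R \<in> carrier_mat (n - 1) m" and Wh: "Wh \<in> carrier_mat m m"
    unfolding R_def Wh_def m_def using Wc by (simp_all add: m_def)
  have "N_mat n es W * adjoint_c (N_mat n es W) = of_real_mat (R * Wh * (Wh * transpose_mat R))"
    unfolding adjoint_N_mat[OF W] unfolding N_mat_def R_def[symmetric] Wh_def[symmetric]
    by (rule of_real_mat_mult[symmetric]) (use R Wh in auto)
  also have "R * Wh * (Wh * transpose_mat R) = R * (Wh * Wh) * transpose_mat R"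
    using R Wh by (simp add: assoc_mult_mat[of _ "n - 1" m _ m _ "n - 1"] assoc_mult_mat[of _ m m _ m _ "n - 1"]
        assoc_mult_mat[of _ "n - 1" m _ m _ m])
  also have "Wh * Wh = W" unfolding Wh_def diag_powr_mult[OF W] using diag_powr_1[OF W] by simp
  finally show ?thesis unfolding R_def .
qed

lemma L_es_carrier: "pos_diag n E \<Longrightarrow> L_es n es E \<in> carrier_mat (n - 1) (n - 1)"
  unfolding L_es_def
  by (rule mult_carrier_mat[OF mult_carrier_mat D_tau_carrier]) (auto simp: pos_diag_carrier)

lemma gram_F_mat_mult_gram_N_mat:
  assumes E: "pos_diag n E" and W: "pos_diag (length es) W"
  shows "F_mat n es E * adjoint_c (F_mat n es E) * (N_mat n es W * adjoint_c (N_mat n es W))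
    = of_real_mat (L_es n es E * R_mat n es * W * transpose_mat (R_mat n es))"
proof -
  define R where "R = R_mat n es"
  have L: "L_es n es E \<in> carrier_mat (n - 1) (n - 1)" by (rule L_es_carrier[OF E, of es])
  have R: "R \<in> carrier_mat (n - 1) (length es)" unfolding R_def by simp
  have Wc: "W \<in> carrier_mat (length es) (length es)" by (rule pos_diag_carrier[OF W])
  have RW: "R * W \<in> carrier_mat (n - 1) (length es)" by (rule mult_carrier_mat[OF R Wc])
  have RWR: "R * W * transpose_mat R \<in> carrier_mat (n - 1) (n - 1)"
    by (rule mult_carrier_mat[OF RW]) (use R in simp)
  have "F_mat n es E * adjoint_c (F_mat n es E) * (N_mat n es W * adjoint_c (N_mat n es W))
      = of_real_mat (L_es n es E * (R * W * transpose_mat R))"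
    unfolding gram_F_mat[OF E] gram_N_mat[OF W] R_def[symmetric] by (rule of_real_mat_mult[OF L RWR, symmetric])
  also have "L_es n es E * (R * W * transpose_mat R) = L_es n es E * R * W * transpose_mat R"
    using assoc_mult_mat[OF L RW, of "transpose_mat R" "n - 1"] assoc_mult_mat[OF L R Wc] R by simp
  finally show ?thesis unfolding R_def .
qed

lemma gram_F_mat_mult_N_mat:
  assumes E: "pos_diag n E" and W: "pos_diag (length es) W"
  shows "F_mat n es E * adjoint_c (F_mat n es E) * N_mat n es W
    = of_real_mat (L_es n es E * R_mat n es * diag_powr W (1/2))"
proof -
  have L: "L_es n es E \<in> carrier_mat (n - 1) (n - 1)" by (rule L_es_carrier[OF E, of es])
  have R: "R_mat n es \<in> carrier_mat (n - 1) (length es)" by simp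
  have Wh: "diag_powr W (1/2) \<in> carrier_mat (length es) (length es)"
    using pos_diag_carrier[OF W] by simp
  have "F_mat n es E * adjoint_c (F_mat n es E) * N_mat n es W
      = of_real_mat (L_es n es E * (R_mat n es * diag_powr W (1/2)))"
    unfolding gram_F_mat[OF E] N_mat_def by (rule of_real_mat_mult[OF L mult_carrier_mat[OF R Wh], symmetric])
  then show ?thesis unfolding assoc_mult_mat[OF L R Wh] .
qed

lemma Pi_tau_eq_transfer:
  assumes S: "factored_system (n - 1) n (length es) (F_mat n es E) (N_mat n es W)"
    and E: "pos_diag n E" and W: "pos_diag (length es) W"
  shows "Pi_tau n es \<sigma>w \<sigma>v E W s
    = factored_system.transfer (n - 1) (F_mat n es E) (N_mat n es W) \<sigma>w \<sigma>v s"
proof -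
  interpret S: factored_system "n - 1" n "length es" "F_mat n es E" "N_mat n es W" \<sigma>w \<sigma>v by (rule S)
  define B1 where "B1 = \<sigma>w \<cdot>\<^sub>m (transpose_mat (D_tau n es) * diag_powr E (-1/2))"
  define B2 where "B2 = (- \<sigma>v) \<cdot>\<^sub>m (L_es n es E * R_mat n es * diag_powr W (1/2))"
  have "transpose_mat (D_tau n es) * diag_powr E (-1/2) \<in> carrier_mat (n - 1) n"
    by (rule mult_carrier_mat) (auto simp: pos_diag_carrier[OF E])
  then have B1: "B1 \<in> carrier_mat (n - 1) n" unfolding B1_def by simp
  have B2: "B2 \<in> carrier_mat (n - 1) (length es)"
    unfolding B2_def using mult_carrier_mat[OF mult_carrier_mat[OF L_es_carrier[OF E] R_mat_carrier]
      diag_powr_carrier[OF pos_diag_carrier[OF W]]] by simp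
  have rows: "dim_row B2 = dim_row B1" using B1 B2 by simp
  have "S.input_mat = of_real_mat (append_cols B1 B2)"
    unfolding S.input_mat_def gram_F_mat_mult_N_mat[OF E W] map_mat_append_cols[OF rows]
    by (simp add: B1_def B2_def of_real_mat_smult F_mat_def)
  also have "append_cols B1 B2
      = mat (n - 1) (n + length es) (\<lambda>(i, j). if j < n then B1 $$ (i, j) else B2 $$ (i, j - n))"
    unfolding append_cols_def carrier_matD[OF B1] carrier_matD[OF B2] ..
  finally show ?thesis
    unfolding Pi_tau_def Let_def S.transfer_def S.loop_mat_def gram_F_mat_mult_gram_N_mat[OF E W]
    unfolding adjoint_N_mat[OF W] B1_def B2_def by simp
qed

lemma hinf_norm_Pi_tau:
  assumes vg: "valid_graph n es" and st: "first_edges_spanning_tree n es" and n: "n \<ge> 2"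
    and E: "pos_diag n E" and W: "pos_diag (length es) W"
  shows "hinf_norm (Pi_tau n es \<sigma>w \<sigma>v E W)
    = max_sv (factored_system.transfer (n - 1) (F_mat n es E) (N_mat n es W) \<sigma>w \<sigma>v 0)"
proof -
  interpret S: factored_system "n - 1" n "length es" "F_mat n es E" "N_mat n es W" \<sigma>w \<sigma>v
    by (rule factored_system_F_N[OF vg st n E W])
  show ?thesis
    unfolding Pi_tau_eq_transfer[OF S.factored_system_axioms E W]
    by (rule hinf_norm_eq_max_sv_0) (rule S.max_sv_transfer_le_transfer_0; use n in simp)
qed

lemma cnorm2_adjoint_F_mat_antimono:
  assumes E: "pos_diag n E" and le: "loewner_le n (e \<cdot>\<^sub>m 1\<^sub>m n) E" and e: "e > 0"
    and x: "x \<in> carrier_vec (n - 1)"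
  shows "cnorm2 (adjoint_c (F_mat n es E) *\<^sub>v x) \<le> cnorm2 (adjoint_c (F_mat n es (e \<cdot>\<^sub>m 1\<^sub>m n)) *\<^sub>v x)"
  unfolding adjoint_F_mat[OF E] adjoint_F_mat[OF pos_diag_smult_one[OF e]]
proof (rule cnorm2_of_real_mat_diag_powr_mult_vec_mono[OF pos_diag_carrier[OF E] _ D_tau_carrier x])
  fix i assume i: "i < n"
  have "e \<le> E $$ (i, i)" using loewner_le_diag[OF le i] i by simp
  then show "0 \<le> E $$ (i, i) powr (-1/2) \<and> E $$ (i, i) powr (-1/2) \<le> (e \<cdot>\<^sub>m 1\<^sub>m n) $$ (i, i) powr (-1/2)"
    using e i by (simp add: powr_mono2')
qed simp

lemma cnorm2_adjoint_N_mat_mono: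
  assumes W: "pos_diag (length es) W" and le: "loewner_le (length es) W (w \<cdot>\<^sub>m 1\<^sub>m (length es))"
    and w: "w > 0" and x: "x \<in> carrier_vec (n - 1)"
  shows "cnorm2 (adjoint_c (N_mat n es W) *\<^sub>v x) \<le> cnorm2 (adjoint_c (N_mat n es (w \<cdot>\<^sub>m 1\<^sub>m (length es))) *\<^sub>v x)"
  unfolding adjoint_N_mat[OF W] adjoint_N_mat[OF pos_diag_smult_one[OF w]]
proof (rule cnorm2_of_real_mat_diag_powr_mult_vec_mono[OF pos_diag_carrier[OF W] _ _ x])
  fix i assume i: "i < length es"
  have "W $$ (i, i) \<le> w" using loewner_le_diag[OF le i] i by simp
  moreover have "W $$ (i, i) > 0" using W i unfolding pos_diag_def by simp
  ultimately show "0 \<le> W $$ (i, i) powr (1/2) \<and> W $$ (i, i) powr (1/2) \<le> (w \<cdot>\<^sub>m 1\<^sub>m (length es)) $$ (i, i) powr (1/2)"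
    using i by (simp add: powr_mono2)
qed simp_all

lemma factored_system_pair_F_N:
  assumes "valid_graph n es" "first_edges_spanning_tree n es" "n \<ge> 2"
    and E: "pos_diag n E" and W: "pos_diag (length es) W" and "e > 0" "w > 0"
    and "loewner_le n (e \<cdot>\<^sub>m 1\<^sub>m n) E" "loewner_le (length es) W (w \<cdot>\<^sub>m 1\<^sub>m (length es))"
  shows "factored_system_pair (n - 1) n (length es) (F_mat n es (e \<cdot>\<^sub>m 1\<^sub>m n))
    (N_mat n es (w \<cdot>\<^sub>m 1\<^sub>m (length es))) (F_mat n es E) (N_mat n es W)"
  unfolding factored_system_pair_def factored_system_pair_axioms_def
  using assms factored_system_F_N[OF assms(1-3)] pos_diag_smult_one
    cnorm2_adjoint_F_mat_antimono[OF E] cnorm2_adjoint_N_mat_mono[OF W]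
  by blast

theorem proposition2:
  fixes n :: nat and es :: "(nat \<times> nat) list"
    and \<sigma>w \<sigma>v w_min w_max \<epsilon>_min \<epsilon>_max :: real
  assumes "n \<ge> 2"
    and "valid_graph n es"
    and "graph_connected n es"
    and "first_edges_spanning_tree n es"
    and "0 < w_min" and "w_min \<le> w_max"
    and "0 < \<epsilon>_min" and "\<epsilon>_min \<le> \<epsilon>_max"
  shows "\<forall>E W. pos_diag n E \<and> pos_diag (length es) W
           \<and> loewner_le (length es) (w_min \<cdot>\<^sub>m 1\<^sub>m (length es)) W
           \<and> loewner_le (length es) W (w_max \<cdot>\<^sub>m 1\<^sub>m (length es))
           \<and> loewner_le n (\<epsilon>_min \<cdot>\<^sub>m 1\<^sub>m n) E
           \<and> loewner_le n E (\<epsilon>_max \<cdot>\<^sub>m 1\<^sub>m n)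
         \<longrightarrow> hinf_norm (Pi_tau n es \<sigma>w \<sigma>v (\<epsilon>_min \<cdot>\<^sub>m 1\<^sub>m n) (w_max \<cdot>\<^sub>m 1\<^sub>m (length es)))
             \<le> hinf_norm (Pi_tau n es \<sigma>w \<sigma>v E W)"
proof (intro allI impI)
  fix E W
  assume "pos_diag n E \<and> pos_diag (length es) W
           \<and> loewner_le (length es) (w_min \<cdot>\<^sub>m 1\<^sub>m (length es)) W
           \<and> loewner_le (length es) W (w_max \<cdot>\<^sub>m 1\<^sub>m (length es))
           \<and> loewner_le n (\<epsilon>_min \<cdot>\<^sub>m 1\<^sub>m n) E
           \<and> loewner_le n E (\<epsilon>_max \<cdot>\<^sub>m 1\<^sub>m n)"
  then have E: "pos_diag n E" and W: "pos_diag (length es) W"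
    and "loewner_le n (\<epsilon>_min \<cdot>\<^sub>m 1\<^sub>m n) E" "loewner_le (length es) W (w_max \<cdot>\<^sub>m 1\<^sub>m (length es))"
    by auto
  moreover have "0 < \<epsilon>_min" "0 < w_max" using assms by auto
  ultimately interpret factored_system_pair "n - 1" n "length es" "F_mat n es (\<epsilon>_min \<cdot>\<^sub>m 1\<^sub>m n)"
    "N_mat n es (w_max \<cdot>\<^sub>m 1\<^sub>m (length es))" "F_mat n es E" "N_mat n es W" \<sigma>w \<sigma>v
    using factored_system_pair_F_N[OF assms(2,4,1) E W] by blast
  have "hinf_norm (Pi_tau n es \<sigma>w \<sigma>v (\<epsilon>_min \<cdot>\<^sub>m 1\<^sub>m n) (w_max \<cdot>\<^sub>m 1\<^sub>m (length es)))
      = max_sv (A.transfer 0)"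
    by (rule hinf_norm_Pi_tau[OF assms(2,4,1)]) (use \<open>0 < \<epsilon>_min\<close> \<open>0 < w_max\<close> in \<open>simp_all add: pos_diag_smult_one\<close>)
  also have "\<dots> \<le> max_sv (B.transfer 0)"
    by (rule max_sv_transfer_0_antimono) (use assms(1) in simp)
  also have "\<dots> = hinf_norm (Pi_tau n es \<sigma>w \<sigma>v E W)"
    by (rule hinf_norm_Pi_tau[OF assms(2,4,1) E W, symmetric])
  finally show "hinf_norm (Pi_tau n es \<sigma>w \<sigma>v (\<epsilon>_min \<cdot>\<^sub>m 1\<^sub>m n) (w_max \<cdot>\<^sub>m 1\<^sub>m (length es)))
      \<le> hinf_norm (Pi_tau n es \<sigma>w \<sigma>v E W)" .
qed

end
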